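(* Let $\Lambda_n^{MP}$ denote the Lebesgue constant of polynomial interpolation in $\mathbb{P}^2_n$ at the Morrow-Patterson points $MP_n$ on $Q=[-1,1]^2$. Then $\Lambda_n^{MP}=\mathcal O(n^2)$, i.e. there is a constant $C>0$ such that $\Lambda_n^{MP}\le Cn^2$ for all positive even integers $n$.
   Context: $\mathbb{P}^2_n$ is the space of real bivariate polynomials of total degree at most $n$. For a positive even integer $n$, the Morrow-Patterson points are $MP_n=\{(x_m,y_{m,k}) : m=1,\dots,n+1,\ k=1,\dots,\tfrac n2+1\}$ with $x_m=\cos\frac{m\pi}{n+2}$ and $y_{m,k}=\cos\frac{2k\pi}{n+3}$ if $m$ is odd, $y_{m,k}=\cos\frac{(2k-1)\pi}{n+3}$ if $m$ is even; this set has $\binom{n+2}{2}$ points and is unisolvent for $\mathbb{P}^2_n$. The Lebesgue constant is $\Lambda_n^{MP}=\max_{(x,y)\in Q}\sum_{a\in MP_n}|\ell_a(x,y)|$, where $\ell_a\in\mathbb{P}^2_n$ are the Lagrange basis polynomials ($\ell_a(b)=\delta_{ab}$ for $a,b\in MP_n$); equivalently it is the operator norm (in the sup-norm on $Q$) of the interpolation operator $\mathcal C(Q)\to\mathbb{P}^2_n$ at $MP_n$. *)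

theory Defs
  imports "HOL-Analysis.Analysis"
begin

definition poly2 :: "nat \<Rightarrow> (real \<times> real \<Rightarrow> real) set" where
  "poly2 n = {f. \<exists>c :: nat \<Rightarrow> nat \<Rightarrow> real.
      \<forall>x y. f (x, y) = (\<Sum>i\<le>n. \<Sum>j\<le>n - i. c i j * x ^ i * y ^ j)}"

definition MP_y :: "nat \<Rightarrow> nat \<Rightarrow> nat \<Rightarrow> real" where
  "MP_y n m k = (if odd m then cos (2 * real k * pi / (real n + 3))
                 else cos ((2 * real k - 1) * pi / (real n + 3)))"

definition MP_points :: "nat \<Rightarrow> (real \<times> real) set" where
  "MP_points n = {(cos (real m * pi / (real n + 2)), MP_y n m k) | m k.
      m \<in> {1..n+1} \<and> k \<in> {1..n div 2 + 1}}"

definition lagrange2 :: "nat \<Rightarrow> (real \<times> real) set \<Rightarrow> real \<times> real \<Rightarrow> (real \<times> real \<Rightarrow> real)" where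
  "lagrange2 n A a = (THE f. f \<in> poly2 n \<and> (\<forall>b\<in>A. f b = (if b = a then 1 else 0)))"

definition lebesgue_const :: "nat \<Rightarrow> (real \<times> real) set \<Rightarrow> real" where
  "lebesgue_const n A = (SUP p \<in> {-1..1} \<times> {-1..1}. \<Sum>a\<in>A. \<bar>lagrange2 n A a p\<bar>)"

definition lebesgue_MP :: "nat \<Rightarrow> real" where
  "lebesgue_MP n = lebesgue_const n (MP_points n)"

end

(*
  The Lagrange polynomial of the node a = (cos theta_a, cos phi_a) is

    L_a(x, y) = 8 / ((n + 2) (n + 3)) * sin theta_a * sin phi_a
                * Sum_{i + l <= n} U_i(x) U_l(y) sin ((i + 1) theta_a) sin ((l + 1) phi_a),

  with U_i the Chebyshev polynomials of the second kind.  The sine vectors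
  (sin ((i + 1) theta_a) sin ((l + 1) phi_a))_a, i + l <= n, are orthogonal over the nodes and
  there are as many nodes as indices, so the sine matrix is a multiple of an orthogonal matrix and
  its rows are orthogonal as well.  This gives both L_a(b) = delta_ab and unisolvence.

  For the estimate put x = cos theta, y = cos phi.  Summation by parts in l and then in i leaves a
  main term of size O(n^2) and boundary terms Sum_i U_i(cos theta) U_(r-i)(cos phi) e^(i i psi)
  with psi = theta_a -+ phi_a.  These are complete homogeneous symmetric polynomials of degree r in
  the unit numbers e^(+-i phi), e^(i (psi +- theta)); divided differences bound them by n^3 times a
  sum of bumps 1 / (1 + n^2 sin^2 (w / 2)) centred at the zeros of w = psi +- theta +- phi modulo
  2 pi.  Along each column of nodes phi_a runs through an arithmetic progression of step
  2 pi / (n + 3), so the bumps sum to O(1) per column and to O(n) over all nodes.  With the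
  factor 1 / ((n + 2) (n + 3)) in front, the main terms and the boundary terms each contribute
  O(n^2) to Sum_a |L_a(x, y)|.
*)

theory Submission
  imports Defs
begin

section \<open>Complete homogeneous symmetric polynomials\<close>

definition hsym2 :: "'a::comm_ring_1 \<Rightarrow> 'a \<Rightarrow> nat \<Rightarrow> 'a" where
  "hsym2 u v p = (\<Sum>i\<le>p. u ^ i * v ^ (p - i))"

fun hsym3 :: "'a::comm_ring_1 \<Rightarrow> 'a \<Rightarrow> 'a \<Rightarrow> nat \<Rightarrow> 'a" where
  "hsym3 u v w 0 = 1"
| "hsym3 u v w (Suc p) = w * hsym3 u v w p + hsym2 u v (Suc p)"

fun hsym4 :: "'a::comm_ring_1 \<Rightarrow> 'a \<Rightarrow> 'a \<Rightarrow> 'a \<Rightarrow> nat \<Rightarrow> 'a" where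
  "hsym4 u v w s 0 = 1"
| "hsym4 u v w s (Suc p) = s * hsym4 u v w s p + hsym3 u v w (Suc p)"

lemma hsym2_0 [simp]: "hsym2 u v 0 = 1"
  by (simp add: hsym2_def)

lemma hsym2_Suc: "hsym2 u v (Suc p) = u * hsym2 u v p + v ^ Suc p"
  unfolding hsym2_def by (subst sum.atMost_Suc_shift) (simp add: sum_distrib_left mult.assoc)

lemma hsym2_commute: "hsym2 u v p = hsym2 v u p"
  unfolding hsym2_def
  by (rule sum.reindex_bij_witness[where i="\<lambda>i. p - i" and j="\<lambda>i. p - i"]) (auto simp: mult.commute)

lemma hsym2_Suc': "hsym2 u v (Suc p) = v * hsym2 u v p + u ^ Suc p"
  using hsym2_Suc[of v u p] by (simp add: hsym2_commute)

lemma hsym2_recurrence: "hsym2 u v (Suc (Suc p)) = (u + v) * hsym2 u v (Suc p) - u * v * hsym2 u v p"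
proof -
  have "v * hsym2 u v (Suc p) = u * v * hsym2 u v p + v ^ Suc (Suc p)"
    by (simp only: hsym2_Suc) (simp add: algebra_simps)
  then show ?thesis
    by (simp only: hsym2_Suc[of u v "Suc p"]) (simp add: algebra_simps)
qed

lemma hsym2_Suc_Suc: "hsym2 u v (Suc (Suc p)) = u ^ Suc (Suc p) + v ^ Suc (Suc p) + u * v * hsym2 u v p"
  by (simp only: hsym2_Suc[of u v "Suc p"] hsym2_Suc'[of u v p]) (simp add: algebra_simps)

lemma diff_mult_hsym2: "(u - v) * hsym2 u v p = u ^ Suc p - v ^ Suc p"
proof (induction p)
  case 0
  then show ?case by simp
next
  case (Suc p)
  have "(u - v) * hsym2 u v (Suc p) = u * ((u - v) * hsym2 u v p) + (u - v) * v ^ Suc p"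
    by (simp only: hsym2_Suc) (simp add: algebra_simps)
  then show ?case
    by (simp only: Suc) (simp add: algebra_simps)
qed

lemma hsym2_mult: "hsym2 (z * u) (z * v) p = z ^ p * hsym2 u v p"
  unfolding hsym2_def sum_distrib_left
proof (rule sum.cong)
  fix i assume "i \<in> {..p}"
  then have "z ^ p = z ^ i * z ^ (p - i)"
    by (simp flip: power_add)
  then show "(z * u) ^ i * (z * v) ^ (p - i) = z ^ p * (u ^ i * v ^ (p - i))"
    by (simp add: power_mult_distrib algebra_simps)
qed simp

lemma diff_mult_hsym3: "(u - w) * hsym3 u v w p = hsym2 u v (Suc p) - hsym2 v w (Suc p)"
proof (induction p)
  case 0
  then show ?case by (simp add: hsym2_def)
next
  case (Suc p)
  have "(u - w) * hsym3 u v w (Suc p) = w * (hsym2 u v (Suc p) - hsym2 v w (Suc p)) + (u - w) * hsym2 u v (Suc p)"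
    by (simp add: algebra_simps flip: Suc)
  also have "\<dots> = hsym2 u v (Suc (Suc p)) - hsym2 v w (Suc (Suc p))"
    by (simp only: hsym2_Suc[of u v "Suc p"] hsym2_Suc'[of v w "Suc p"]) (simp add: algebra_simps)
  finally show ?case .
qed

lemma diff_mult_hsym4: "(u - s) * hsym4 u v w s p = hsym3 u v w (Suc p) - hsym3 v w s (Suc p)"
proof (induction p)
  case 0
  then show ?case by (simp add: hsym2_def)
next
  case (Suc p)
  have "(u - s) * hsym4 u v w s (Suc p) = s * ((u - s) * hsym4 u v w s p) + (u - s) * hsym3 u v w (Suc p)"
    by (simp add: algebra_simps)
  also have "\<dots> = w * hsym3 u v w (Suc p) + (u - w) * hsym3 u v w (Suc p) - s * hsym3 v w s (Suc p)"
    by (simp only: Suc) (simp add: algebra_simps)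
  also have "\<dots> = w * hsym3 u v w (Suc p) + (hsym2 u v (Suc (Suc p)) - hsym2 v w (Suc (Suc p))) - s * hsym3 v w s (Suc p)"
    by (simp only: diff_mult_hsym3)
  also have "\<dots> = hsym3 u v w (Suc (Suc p)) - hsym3 v w s (Suc (Suc p))"
    by (simp only: hsym3.simps) (simp add: algebra_simps)
  finally show ?case .
qed

lemma hsym3_eq_sum: "hsym3 u v w p = (\<Sum>q\<le>p. hsym2 u v (p - q) * w ^ q)"
  by (induction p) (simp_all add: sum.atMost_Suc_shift sum_distrib_left algebra_simps del: sum.atMost_Suc)

lemma hsym4_eq_sum: "hsym4 u v w s p = (\<Sum>q\<le>p. hsym2 u v (p - q) * hsym2 w s q)"
proof (induction p)
  case 0
  then show ?case by simp
next
  case (Suc p)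
  have "(\<Sum>q\<le>Suc p. hsym2 u v (Suc p - q) * hsym2 w s q)
      = hsym2 u v (Suc p) + (\<Sum>q\<le>p. hsym2 u v (p - q) * (s * hsym2 w s q + w ^ Suc q))"
    by (subst sum.atMost_Suc_shift) (simp add: hsym2_Suc')
  also have "\<dots> = hsym2 u v (Suc p) + s * hsym4 u v w s p + w * hsym3 u v w p"
    by (simp add: Suc hsym3_eq_sum sum.distrib sum_distrib_left algebra_simps)
  finally show ?case by (simp add: algebra_simps)
qed

lemma norm_hsym2_le:
  fixes u v :: "'a::real_normed_field"
  assumes "norm u = 1" "norm v = 1"
  shows "norm (hsym2 u v p) \<le> real p + 1"
proof -
  have "norm (hsym2 u v p) \<le> (\<Sum>i\<le>p. norm (u ^ i * v ^ (p - i)))"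
    unfolding hsym2_def by (rule norm_sum)
  also have "\<dots> = real p + 1"
    by (simp add: norm_mult norm_power assms)
  finally show ?thesis .
qed

lemma norm_diff_mult_norm_hsym2_le:
  fixes u v :: "'a::real_normed_field"
  assumes "norm u = 1" "norm v = 1"
  shows "norm (u - v) * norm (hsym2 u v p) \<le> 2"
proof -
  have "norm (u - v) * norm (hsym2 u v p) = norm (u ^ Suc p - v ^ Suc p)"
    by (metis norm_mult diff_mult_hsym2)
  also have "\<dots> \<le> norm (u ^ Suc p) + norm (v ^ Suc p)"
    by (rule norm_triangle_ineq4)
  also have "\<dots> = 2"
    by (simp only: norm_power assms) simp
  finally show ?thesis .
qed

lemma norm_hsym4_le_cube:
  fixes u v w s :: "'a::real_normed_field"
  assumes "norm u = 1" "norm v = 1" "norm w = 1" "norm s = 1"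
  shows "norm (hsym4 u v w s p) \<le> (real p + 1) ^ 3"
proof -
  have "norm (hsym4 u v w s p) \<le> (\<Sum>q\<le>p. norm (hsym2 u v (p - q)) * norm (hsym2 w s q))"
    unfolding hsym4_eq_sum norm_mult[symmetric] by (rule norm_sum)
  also have "\<dots> \<le> (\<Sum>q\<le>p. (real p + 1) * (real p + 1))"
  proof (intro sum_mono mult_mono)
    fix q assume "q \<in> {..p}"
    then show "norm (hsym2 u v (p - q)) \<le> real p + 1" "norm (hsym2 w s q) \<le> real p + 1"
      using norm_hsym2_le[OF assms(1,2), of "p - q"] norm_hsym2_le[OF assms(3,4), of q] by auto
  qed simp_all
  also have "\<dots> = (real p + 1) ^ 3"
    by (simp add: power3_eq_cube)
  finally show ?thesis .
qed

lemma norm_hsym2_le_div: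
  fixes u v :: "'a::real_normed_field"
  assumes "norm u = 1" "norm v = 1" "D > 0" "D \<le> norm (u - v)"
  shows "norm (hsym2 u v p) \<le> 2 / D"
proof -
  have "D * norm (hsym2 u v p) \<le> norm (u - v) * norm (hsym2 u v p)"
    using assms(4) by (rule mult_right_mono) simp
  then have "D * norm (hsym2 u v p) \<le> 2"
    using norm_diff_mult_norm_hsym2_le[OF assms(1,2), of p] by linarith
  then show ?thesis
    using assms(3) by (simp add: field_simps)
qed

lemma norm_hsym3_le:
  fixes u v w :: "'a::real_normed_field"
  assumes "norm u = 1" "norm v = 1" "norm w = 1" "D > 0" "D \<le> norm (u - w)"
    and "D \<le> norm (u - v) \<or> D \<le> norm (v - w)"
  shows "norm (hsym3 u v w p) \<le> (real p + 2 + 2 / D) / D"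
proof -
  have "norm (hsym2 u v (Suc p)) + norm (hsym2 v w (Suc p)) \<le> real p + 2 + 2 / D"
    using assms(6)
  proof
    assume "D \<le> norm (u - v)"
    then have "norm (hsym2 u v (Suc p)) \<le> 2 / D"
      by (rule norm_hsym2_le_div[OF assms(1,2,4)])
    moreover have "norm (hsym2 v w (Suc p)) \<le> real p + 2"
      using norm_hsym2_le[OF assms(2,3), of "Suc p"] by simp
    ultimately show ?thesis
      by linarith
  next
    assume "D \<le> norm (v - w)"
    then have "norm (hsym2 v w (Suc p)) \<le> 2 / D"
      by (rule norm_hsym2_le_div[OF assms(2,3,4)])
    moreover have "norm (hsym2 u v (Suc p)) \<le> real p + 2"
      using norm_hsym2_le[OF assms(1,2), of "Suc p"] by simp
    ultimately show ?thesis
      by linarith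
  qed
  moreover have "norm (u - w) * norm (hsym3 u v w p) = norm (hsym2 u v (Suc p) - hsym2 v w (Suc p))"
    by (metis norm_mult diff_mult_hsym3)
  moreover have "D * norm (hsym3 u v w p) \<le> norm (u - w) * norm (hsym3 u v w p)"
    using assms(5) by (rule mult_right_mono) simp
  ultimately have "D * norm (hsym3 u v w p) \<le> real p + 2 + 2 / D"
    using norm_triangle_ineq4[of "hsym2 u v (Suc p)" "hsym2 v w (Suc p)"] by linarith
  then show ?thesis
    using assms(4) by (simp add: field_simps)
qed

lemma norm_hsym4_le:
  fixes u v w s :: "'a::real_normed_field"
  assumes "norm u = 1" "norm v = 1" "norm w = 1" "norm s = 1" "D > 0"
    and "D \<le> norm (u - w)" "D \<le> norm (v - w)" "D \<le> norm (u - s)" "D \<le> norm (v - s)"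
  shows "norm (hsym4 u v w s p) \<le> 2 * (real p + 3 + 2 / D) / D ^ 2"
proof -
  have "norm (hsym3 u v w (Suc p)) \<le> (real p + 3 + 2 / D) / D"
    using norm_hsym3_le[OF assms(1,2,3,5,6), of "Suc p"] assms(7) by (simp del: hsym3.simps add: add_ac)
  \<comment> \<open>\<open>w\<close> and \<open>s\<close> may coincide; the disjunctive hypothesis of \<open>norm_hsym3_le\<close>
    lets \<open>D \<le> norm (v - w)\<close> stand in for \<open>D \<le> norm (w - s)\<close>.\<close>
  moreover have "norm (hsym3 v w s (Suc p)) \<le> (real p + 3 + 2 / D) / D"
    using norm_hsym3_le[OF assms(2,3,4,5,9), of "Suc p"] assms(7) by (simp del: hsym3.simps add: add_ac)
  ultimately have "norm (hsym3 u v w (Suc p)) + norm (hsym3 v w s (Suc p)) \<le> 2 * ((real p + 3 + 2 / D) / D)"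
    by linarith
  moreover have "norm (u - s) * norm (hsym4 u v w s p) = norm (hsym3 u v w (Suc p) - hsym3 v w s (Suc p))"
    by (metis norm_mult diff_mult_hsym4)
  moreover have "D * norm (hsym4 u v w s p) \<le> norm (u - s) * norm (hsym4 u v w s p)"
    using assms(8) by (rule mult_right_mono) simp
  ultimately have "D * norm (hsym4 u v w s p) \<le> 2 * ((real p + 3 + 2 / D) / D)"
    using norm_triangle_ineq4[of "hsym3 u v w (Suc p)" "hsym3 v w s (Suc p)"] by linarith
  then show ?thesis
    using assms(5) by (simp add: field_simps power2_eq_square)
qed

lemma norm_hsym4_le_localized:
  fixes u v w s :: "'a::real_normed_field"
  assumes "norm u = 1" "norm v = 1" "norm w = 1" "norm s = 1" "n \<ge> 1" "p \<le> n" "D \<ge> 0"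
    and "D \<le> norm (u - w)" "D \<le> norm (v - w)" "D \<le> norm (u - s)" "D \<le> norm (v - s)"
  shows "norm (hsym4 u v w s p) \<le> 16 * real n ^ 3 / (1 + real n ^ 2 * D ^ 2 / 4)"
proof (cases "real n * D \<le> 2")
  case True
  have "norm (hsym4 u v w s p) \<le> (real p + 1) ^ 3"
    by (rule norm_hsym4_le_cube[OF assms(1-4)])
  also have "\<dots> \<le> (2 * real n) ^ 3"
    using assms(5,6) by (intro power_mono) auto
  also have "\<dots> = 16 * real n ^ 3 / 2"
    by simp
  also have "\<dots> \<le> 16 * real n ^ 3 / (1 + real n ^ 2 * D ^ 2 / 4)"
  proof (rule divide_left_mono)
    have "(real n * D) ^ 2 \<le> 2 ^ 2"
      using True assms(7) by (intro power_mono) auto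
    then show "1 + real n ^ 2 * D ^ 2 / 4 \<le> 2"
      by (simp add: power_mult_distrib)
  qed (auto intro!: add_pos_nonneg)
  finally show ?thesis .
next
  case False
  have n: "real n > 0"
    using assms(5) by simp
  have D: "D > 0"
    using False assms(7) n by (metis mult_zero_right not_le order_le_less zero_le_numeral)
  have "2 / D < real n"
    using False D by (simp add: field_simps)
  have "norm (hsym4 u v w s p) \<le> 2 * (real p + 3 + 2 / D) / D ^ 2"
    by (rule norm_hsym4_le[OF assms(1-4) D assms(8-11)])
  also have "\<dots> \<le> 2 * (real n + 3 + real n) / D ^ 2"
    using \<open>2 / D < real n\<close> assms(6) D by (intro divide_right_mono mult_left_mono add_mono) auto
  also have "\<dots> \<le> 32 * real n / D ^ 2"
    using assms(5) D by (intro divide_right_mono) auto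
  also have "\<dots> = 16 * real n ^ 3 / (real n ^ 2 * D ^ 2 / 2)"
    using n D by (simp add: field_simps power2_eq_square power3_eq_cube)
  also have "\<dots> \<le> 16 * real n ^ 3 / (1 + real n ^ 2 * D ^ 2 / 4)"
  proof (rule divide_left_mono)
    have "2 ^ 2 \<le> (real n * D) ^ 2"
      using False by (intro power_mono) auto
    then have "4 \<le> real n ^ 2 * D ^ 2"
      by (simp add: power_mult_distrib)
    then show "1 + real n ^ 2 * D ^ 2 / 4 \<le> real n ^ 2 * D ^ 2 / 2"
      by linarith
  qed (use n D in \<open>auto intro!: add_pos_nonneg mult_pos_pos\<close>)
  finally show ?thesis .
qed

section \<open>Chebyshev polynomials of the second kind\<close>

fun chebyshev_U :: "nat \<Rightarrow> real \<Rightarrow> real" where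
  "chebyshev_U 0 x = 1"
| "chebyshev_U (Suc 0) x = 2 * x"
| "chebyshev_U (Suc (Suc i)) x = 2 * x * chebyshev_U (Suc i) x - chebyshev_U i x"

lemma chebyshev_U_cos_eq_hsym2: "complex_of_real (chebyshev_U i (cos t)) = hsym2 (cis t) (cis (- t)) i"
proof (induction i "cos t" rule: chebyshev_U.induct)
  case 1
  then show ?case by simp
next
  case 2
  then show ?case by (simp add: hsym2_def complex_eq_iff)
next
  case (3 i)
  have "cis t + cis (- t) = complex_of_real (2 * cos t)" "cis t * cis (- t) = 1"
    by (simp_all add: complex_eq_iff cis_mult)
  then show ?case
    by (simp only: hsym2_recurrence chebyshev_U.simps flip: 3) simp
qed

lemma cis_diff_cis_neg: "cis t - cis (- t) = \<i> * complex_of_real (2 * sin t)"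
  by (simp add: complex_eq_iff)

lemma sin_mult_chebyshev_U_cos: "sin t * chebyshev_U i (cos t) = sin ((real i + 1) * t)"
proof -
  have "cis t ^ Suc i = cis ((real i + 1) * t)" "cis (- t) ^ Suc i = cis (- ((real i + 1) * t))"
    unfolding Complex.DeMoivre by (simp_all add: algebra_simps)
  then have "\<i> * complex_of_real (2 * sin t) * complex_of_real (chebyshev_U i (cos t))
      = cis ((real i + 1) * t) - cis (- ((real i + 1) * t))"
    using diff_mult_hsym2[of "cis t" "cis (- t)" i] by (simp only: cis_diff_cis_neg chebyshev_U_cos_eq_hsym2)
  then show ?thesis
    by (simp add: complex_eq_iff)
qed

lemma abs_chebyshev_U_cos_le: "\<bar>chebyshev_U i (cos t)\<bar> \<le> real i + 1"
  using norm_hsym2_le[of "cis t" "cis (- t)" i] by (simp flip: chebyshev_U_cos_eq_hsym2)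

lemma chebyshev_U_cos_diff2: "chebyshev_U (Suc (Suc i)) (cos t) - chebyshev_U i (cos t) = 2 * cos ((real i + 2) * t)"
proof -
  have "cis t * cis (- t) = 1"
    by (simp add: cis_mult)
  then have "complex_of_real (chebyshev_U (Suc (Suc i)) (cos t) - chebyshev_U i (cos t))
      = cis t ^ Suc (Suc i) + cis (- t) ^ Suc (Suc i)"
    by (simp only: of_real_diff chebyshev_U_cos_eq_hsym2 hsym2_Suc_Suc) simp
  also have "\<dots> = cis ((real i + 2) * t) + cis (- ((real i + 2) * t))"
    unfolding Complex.DeMoivre by (simp add: algebra_simps)
  finally show ?thesis
    by (simp add: complex_eq_iff)
qed

fun chebyshev_U_poly :: "nat \<Rightarrow> real poly" where
  "chebyshev_U_poly 0 = 1"
| "chebyshev_U_poly (Suc 0) = [:0, 2:]"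
| "chebyshev_U_poly (Suc (Suc i)) = [:0, 2:] * chebyshev_U_poly (Suc i) - chebyshev_U_poly i"

lemma poly_chebyshev_U_poly [simp]: "poly (chebyshev_U_poly i) x = chebyshev_U i x"
  by (induction i rule: chebyshev_U_poly.induct) simp_all

lemma degree_chebyshev_U_poly: "degree (chebyshev_U_poly i) \<le> i"
proof (induction i rule: chebyshev_U_poly.induct)
  case (3 i)
  have "degree ([:0, 2:] * chebyshev_U_poly (Suc i)) \<le> Suc (Suc i)"
    using degree_mult_le[of "[:0, 2:]" "chebyshev_U_poly (Suc i)"] 3(1) by simp
  then show ?case
    using degree_diff_le_max[of "[:0, 2:] * chebyshev_U_poly (Suc i)" "chebyshev_U_poly i"] 3(2) by simp
qed simp_all

lemma lead_coeff_chebyshev_U_poly: "coeff (chebyshev_U_poly i) i = 2 ^ i"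
proof (induction i rule: chebyshev_U_poly.induct)
  case (3 i)
  have "coeff (chebyshev_U_poly i) (Suc (Suc i)) = 0"
    using degree_chebyshev_U_poly[of i] by (intro coeff_eq_0) simp
  then show ?case
    using 3(1) by (simp add: mult_pCons_left)
qed simp_all

lemma chebyshev_U_eq_sum_coeff:
  assumes "i \<le> d"
  shows "chebyshev_U i x = (\<Sum>p\<le>d. coeff (chebyshev_U_poly i) p * x ^ p)"
  using degree_chebyshev_U_poly[of i] assms
  by (simp add: poly_altdef flip: poly_chebyshev_U_poly)
     (intro sum.mono_neutral_left, auto simp: coeff_eq_0)

lemma poly_eq_sum_chebyshev_U:
  assumes "degree P \<le> d"
  shows "\<exists>\<beta>. \<forall>x. poly P x = (\<Sum>i\<le>d. \<beta> i * chebyshev_U i x)"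
  using assms
proof (induction d arbitrary: P)
  case 0
  then show ?case
    by (intro exI[of _ "\<lambda>i. coeff P 0"]) (simp add: poly_altdef)
next
  case (Suc d)
  define c where "c = coeff P (Suc d) / 2 ^ Suc d"
  define Q where "Q = P - smult c (chebyshev_U_poly (Suc d))"
  have "degree Q \<le> d"
  proof (rule degree_le, intro allI impI)
    fix j assume "d < j"
    show "coeff Q j = 0"
    proof (cases "j = Suc d")
      case True
      then show ?thesis by (simp add: Q_def c_def lead_coeff_chebyshev_U_poly)
    next
      case False
      then have "coeff P j = 0" "coeff (chebyshev_U_poly (Suc d)) j = 0"
        using \<open>d < j\<close> Suc.prems degree_chebyshev_U_poly[of "Suc d"] by (auto intro: coeff_eq_0)
      then show ?thesis by (simp add: Q_def)
    qed
  qed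
  then obtain \<beta> where \<beta>: "\<forall>x. poly Q x = (\<Sum>i\<le>d. \<beta> i * chebyshev_U i x)"
    using Suc.IH by blast
  have "poly P x = (\<Sum>i\<le>Suc d. (\<beta>(Suc d := c)) i * chebyshev_U i x)" for x
    using \<beta>[rule_format, of x] by (simp add: Q_def diff_eq_eq)
  then show ?case
    by blast
qed

lemma power_eq_sum_chebyshev_U: "\<exists>\<beta>. \<forall>x. x ^ p = (\<Sum>i\<le>p. \<beta> i * chebyshev_U i x)"
  using poly_eq_sum_chebyshev_U[of "monom 1 p" p] by (simp add: degree_monom_le poly_monom)

section \<open>A localized bound for Chebyshev exponential sums\<close>

definition bump :: "nat \<Rightarrow> real \<Rightarrow> real" where
  "bump n w = 1 / (1 + real n ^ 2 * sin (w / 2) ^ 2)"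

definition bump_sum :: "nat \<Rightarrow> real \<Rightarrow> real \<Rightarrow> real \<Rightarrow> real" where
  "bump_sum n \<theta> \<phi> \<psi> = bump n (\<psi> + \<theta> - \<phi>) + bump n (\<psi> + \<theta> + \<phi>) + bump n (\<psi> - \<theta> - \<phi>) + bump n (\<psi> - \<theta> + \<phi>)"

lemma bump_pos: "bump n w > 0"
  unfolding bump_def by (intro divide_pos_pos add_pos_nonneg) auto

lemma bump_uminus: "bump n (- w) = bump n w"
  by (simp add: bump_def)

lemma norm_cis_diff: "norm (cis a - cis b) = 2 * \<bar>sin ((a - b) / 2)\<bar>"
proof -
  have "cis a - cis b = cis ((a + b) / 2) * (cis ((a - b) / 2) - cis (- ((a - b) / 2)))"
    by (simp add: right_diff_distrib cis_mult field_simps)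
  also have "\<dots> = cis ((a + b) / 2) * (\<i> * complex_of_real (2 * sin ((a - b) / 2)))"
    by (simp only: cis_diff_cis_neg)
  finally show ?thesis
    by (simp add: norm_mult)
qed

definition chebyshev_exp_sum :: "real \<Rightarrow> real \<Rightarrow> real \<Rightarrow> nat \<Rightarrow> complex" where
  "chebyshev_exp_sum \<theta> \<phi> \<psi> r =
     (\<Sum>i\<le>r. complex_of_real (chebyshev_U i (cos \<theta>) * chebyshev_U (r - i) (cos \<phi>)) * cis (real i * \<psi>))"

lemma chebyshev_exp_sum_eq_hsym4:
  "chebyshev_exp_sum \<theta> \<phi> \<psi> r = hsym4 (cis \<phi>) (cis (- \<phi>)) (cis (\<psi> + \<theta>)) (cis (\<psi> - \<theta>)) r"
proof -
  have "hsym2 (cis (\<psi> + \<theta>)) (cis (\<psi> - \<theta>)) i = cis (real i * \<psi>) * complex_of_real (chebyshev_U i (cos \<theta>))" for i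
  proof -
    have "hsym2 (cis (\<psi> + \<theta>)) (cis (\<psi> - \<theta>)) i = hsym2 (cis \<psi> * cis \<theta>) (cis \<psi> * cis (- \<theta>)) i"
      by (simp add: cis_mult)
    also have "\<dots> = cis (real i * \<psi>) * complex_of_real (chebyshev_U i (cos \<theta>))"
      by (simp add: hsym2_mult Complex.DeMoivre chebyshev_U_cos_eq_hsym2)
    finally show ?thesis .
  qed
  then show ?thesis
    unfolding chebyshev_exp_sum_def hsym4_eq_sum
    by (auto simp: chebyshev_U_cos_eq_hsym2 intro!: sum.cong)
qed

lemma norm_chebyshev_exp_sum_le:
  assumes "n \<ge> 1" "r \<le> n"
  shows "norm (chebyshev_exp_sum \<theta> \<phi> \<psi> r) \<le> 16 * real n ^ 3 * bump_sum n \<theta> \<phi> \<psi>"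
proof -
  define w where "w = [\<psi> + \<theta> - \<phi>, \<psi> + \<theta> + \<phi>, \<psi> - \<theta> - \<phi>, \<psi> - \<theta> + \<phi>]"
  \<comment> \<open>The numbers \<open>2 * \<bar>sin (x / 2)\<bar>\<close>, \<open>x \<in> set w\<close>, are the distances from \<open>cis (\<plusminus>\<phi>)\<close> to \<open>cis (\<psi> \<plusminus> \<theta>)\<close>.\<close>
  define D where "D = Min ((\<lambda>x. 2 * \<bar>sin (x / 2)\<bar>) ` set w)"
  have D_le: "D \<le> 2 * \<bar>sin (x / 2)\<bar>" if "x \<in> set w" for x
    unfolding D_def using that by (intro Min_le) auto
  have "D \<in> (\<lambda>x. 2 * \<bar>sin (x / 2)\<bar>) ` set w"
    unfolding D_def by (intro Min_in) (auto simp: w_def)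
  then obtain x where x: "x \<in> set w" "D = 2 * \<bar>sin (x / 2)\<bar>"
    by blast
  have dist: "norm (cis a - cis b) = 2 * \<bar>sin ((b - a) / 2)\<bar>" for a b
    using norm_cis_diff[of b a] by (simp add: norm_minus_commute)
  have "norm (hsym4 (cis \<phi>) (cis (- \<phi>)) (cis (\<psi> + \<theta>)) (cis (\<psi> - \<theta>)) r)
      \<le> 16 * real n ^ 3 / (1 + real n ^ 2 * D ^ 2 / 4)"
    using D_le x by (intro norm_hsym4_le_localized assms) (auto simp: w_def dist)
  also have "\<dots> = 16 * real n ^ 3 * bump n x"
    by (simp add: x(2) bump_def power_mult_distrib)
  also have "\<dots> \<le> 16 * real n ^ 3 * bump_sum n \<theta> \<phi> \<psi>"
  proof (rule mult_left_mono)
    show "bump n x \<le> bump_sum n \<theta> \<phi> \<psi>"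
      using x(1) bump_pos[of n "\<psi> + \<theta> - \<phi>"] bump_pos[of n "\<psi> + \<theta> + \<phi>"]
        bump_pos[of n "\<psi> - \<theta> - \<phi>"] bump_pos[of n "\<psi> - \<theta> + \<phi>"]
      unfolding w_def bump_sum_def by auto
  qed simp
  finally show ?thesis
    by (simp add: chebyshev_exp_sum_eq_hsym4)
qed

section \<open>Summation by parts\<close>

definition back_diff2 :: "(nat \<Rightarrow> real) \<Rightarrow> nat \<Rightarrow> real" where
  "back_diff2 f i = f i - (if i < 2 then 0 else f (i - 2))"

lemma sum_mult_diff2_by_parts:
  "(\<Sum>i\<le>r. f i * (c i - c (i + 2)))
     = (\<Sum>i\<le>r. back_diff2 f i * c i) - (if r = 0 then 0 else f (r - 1)) * c (r + 1) - f r * c (r + 2)"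
proof (induction r)
  case 0
  then show ?case by (simp add: back_diff2_def algebra_simps)
next
  case (Suc r)
  then show ?case by (cases r) (simp_all add: back_diff2_def algebra_simps)
qed

lemma abs_sum_mult_diff2_le:
  assumes "\<And>j. \<bar>c j\<bar> \<le> 1" "\<And>i. i \<le> r \<Longrightarrow> \<bar>f i\<bar> \<le> M" "\<And>i. i \<le> r \<Longrightarrow> \<bar>back_diff2 f i\<bar> \<le> B"
  shows "\<bar>\<Sum>i\<le>r. f i * (c i - c (i + 2))\<bar> \<le> (real r + 1) * B + 2 * M"
proof -
  have le: "\<bar>x * y\<bar> \<le> K" if "\<bar>x\<bar> \<le> K" "\<bar>y\<bar> \<le> 1" for x y K :: real
    using that mult_mono[OF that] by (simp add: abs_mult)
  have "\<bar>\<Sum>i\<le>r. back_diff2 f i * c i\<bar> \<le> (\<Sum>i\<le>r. B)"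
    using assms(1,3) le by (intro order_trans[OF sum_abs] sum_mono) auto
  moreover have "\<bar>(if r = 0 then 0 else f (r - 1)) * c (r + 1)\<bar> \<le> M"
    using assms(1)[of "r + 1"] assms(2)[of "r - 1"] assms(2)[of r] le by auto
  moreover have "\<bar>f r * c (r + 2)\<bar> \<le> M"
    using assms(1)[of "r + 2"] assms(2)[of r] le by auto
  ultimately show ?thesis
    unfolding sum_mult_diff2_by_parts by (simp add: algebra_simps)
qed

lemma abs_back_diff2_chebyshev_U_le: "\<bar>back_diff2 (\<lambda>l. chebyshev_U l (cos t)) i\<bar> \<le> 2"
proof (cases "i < 2")
  case True
  then have "i = 0 \<or> i = 1" by auto
  then show ?thesis by (auto simp: back_diff2_def abs_mult)
next
  case False
  then obtain k where "i = Suc (Suc k)"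
    by (metis add_2_eq_Suc le_add_diff_inverse not_less)
  then show ?thesis
    using chebyshev_U_cos_diff2[of k t] by (simp add: back_diff2_def abs_mult)
qed

lemma triangle_sum_by_parts:
  assumes "n \<ge> 1"
  shows "(\<Sum>i\<le>n. \<Sum>l\<le>n - i. u i * v l * (c i - c (i + 2)) * (d l - d (l + 2)))
       = (\<Sum>i\<le>n. u i * (\<Sum>l\<le>n - i. back_diff2 v l * d l) * (c i - c (i + 2)))
         - (\<Sum>i\<le>n - 1. u i * v (n - 1 - i) * (c i - c (i + 2)) * d (n + 1 - i))
         - (\<Sum>i\<le>n. u i * v (n - i) * (c i - c (i + 2)) * d (n + 2 - i))"
proof -
  have inner: "(\<Sum>l\<le>n - i. v l * (d l - d (l + 2)))
      = (\<Sum>l\<le>n - i. back_diff2 v l * d l) - (if i < n then v (n - 1 - i) * d (n + 1 - i) else 0) - v (n - i) * d (n + 2 - i)"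
    if "i \<le> n" for i
  proof -
    have "n - i - 1 = n - 1 - i" "n - i + 1 = n + 1 - i" "n - i + 2 = n + 2 - i"
      using that by auto
    then show ?thesis
      using sum_mult_diff2_by_parts[of v d "n - i"] that by (cases "i < n") (auto simp: numeral_2_eq_2)
  qed
  have "(\<Sum>i\<le>n. \<Sum>l\<le>n - i. u i * v l * (c i - c (i + 2)) * (d l - d (l + 2)))
      = (\<Sum>i\<le>n. u i * (c i - c (i + 2)) * (\<Sum>l\<le>n - i. v l * (d l - d (l + 2))))"
    by (simp add: sum_distrib_left algebra_simps)
  also have "\<dots> = (\<Sum>i\<le>n. u i * (c i - c (i + 2)) * ((\<Sum>l\<le>n - i. back_diff2 v l * d l)
      - (if i < n then v (n - 1 - i) * d (n + 1 - i) else 0) - v (n - i) * d (n + 2 - i)))"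
    by (intro sum.cong refl) (simp only: inner atMost_iff)
  also have "\<dots> = (\<Sum>i\<le>n. u i * (\<Sum>l\<le>n - i. back_diff2 v l * d l) * (c i - c (i + 2))
      - (if i < n then u i * v (n - 1 - i) * (c i - c (i + 2)) * d (n + 1 - i) else 0)
      - u i * v (n - i) * (c i - c (i + 2)) * d (n + 2 - i))"
    by (intro sum.cong refl) (auto simp: algebra_simps)
  also have "\<dots> = (\<Sum>i\<le>n. u i * (\<Sum>l\<le>n - i. back_diff2 v l * d l) * (c i - c (i + 2)))
      - (\<Sum>i\<le>n. if i < n then u i * v (n - 1 - i) * (c i - c (i + 2)) * d (n + 1 - i) else 0)
      - (\<Sum>i\<le>n. u i * v (n - i) * (c i - c (i + 2)) * d (n + 2 - i))"
    by (simp only: sum_subtractf)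
  also have "(\<Sum>i\<le>n. if i < n then u i * v (n - 1 - i) * (c i - c (i + 2)) * d (n + 1 - i) else 0)
      = (\<Sum>i\<le>n - 1. u i * v (n - 1 - i) * (c i - c (i + 2)) * d (n + 1 - i))"
    using assms by (simp add: sum.If_cases) (intro sum.cong, auto)
  finally show ?thesis .
qed

lemma Im_cis_mult_chebyshev_exp_sum:
  "Im (cis c * chebyshev_exp_sum \<theta> \<phi> \<psi> r)
     = (\<Sum>i\<le>r. chebyshev_U i (cos \<theta>) * chebyshev_U (r - i) (cos \<phi>) * sin (real i * \<psi> + c))"
  unfolding chebyshev_exp_sum_def sum_distrib_left Im_sum
  by (intro sum.cong) (simp_all add: sin_add algebra_simps)

lemma cos_diff_cos_add2: "cos (real i * a) - cos (real (i + 2) * a) = 2 * sin a * sin ((real i + 1) * a)"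
  by (simp add: cos_diff_cos algebra_simps add_divide_distrib)

lemma abs_boundary_sum_le:
  "\<bar>\<Sum>i\<le>r. chebyshev_U i (cos \<theta>) * chebyshev_U (r - i) (cos \<phi>) * (cos (real i * \<alpha>) - cos (real (i + 2) * \<alpha>))
       * cos (real (r + 2 - i) * \<beta>)\<bar>
   \<le> norm (chebyshev_exp_sum \<theta> \<phi> (\<alpha> - \<beta>) r) + norm (chebyshev_exp_sum \<theta> \<phi> (\<alpha> + \<beta>) r)"
proof -
  define c1 where "c1 = \<alpha> + (real r + 2) * \<beta>"
  define c2 where "c2 = \<alpha> - (real r + 2) * \<beta>"
  have "(\<Sum>i\<le>r. chebyshev_U i (cos \<theta>) * chebyshev_U (r - i) (cos \<phi>) * (cos (real i * \<alpha>) - cos (real (i + 2) * \<alpha>))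
       * cos (real (r + 2 - i) * \<beta>))
      = sin \<alpha> * (Im (cis c1 * chebyshev_exp_sum \<theta> \<phi> (\<alpha> - \<beta>) r) + Im (cis c2 * chebyshev_exp_sum \<theta> \<phi> (\<alpha> + \<beta>) r))"
    unfolding Im_cis_mult_chebyshev_exp_sum sum.distrib[symmetric] sum_distrib_left
  proof (rule sum.cong)
    fix i assume "i \<in> {..r}"
    define A where "A = chebyshev_U i (cos \<theta>) * chebyshev_U (r - i) (cos \<phi>)"
    have "real (r + 2 - i) = real r + 2 - real i"
      using \<open>i \<in> {..r}\<close> by auto
    moreover note cos_diff_cos_add2[of i \<alpha>]
    ultimately have "A * (cos (real i * \<alpha>) - cos (real (i + 2) * \<alpha>)) * cos (real (r + 2 - i) * \<beta>)
        = sin \<alpha> * A * (2 * sin ((real i + 1) * \<alpha>) * cos ((real r + 2 - real i) * \<beta>))"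
      by simp
    also have "2 * sin ((real i + 1) * \<alpha>) * cos ((real r + 2 - real i) * \<beta>)
        = sin (real i * (\<alpha> - \<beta>) + c1) + sin (real i * (\<alpha> + \<beta>) + c2)"
      using sin_times_cos[of "(real i + 1) * \<alpha>" "(real r + 2 - real i) * \<beta>"]
      by (simp add: c1_def c2_def algebra_simps)
    finally show "chebyshev_U i (cos \<theta>) * chebyshev_U (r - i) (cos \<phi>) * (cos (real i * \<alpha>) - cos (real (i + 2) * \<alpha>))
        * cos (real (r + 2 - i) * \<beta>)
      = sin \<alpha> * (chebyshev_U i (cos \<theta>) * chebyshev_U (r - i) (cos \<phi>) * sin (real i * (\<alpha> - \<beta>) + c1)
        + chebyshev_U i (cos \<theta>) * chebyshev_U (r - i) (cos \<phi>) * sin (real i * (\<alpha> + \<beta>) + c2))"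
      by (simp add: A_def algebra_simps)
  qed simp
  also have "\<bar>\<dots>\<bar> \<le> 1 * (norm (cis c1 * chebyshev_exp_sum \<theta> \<phi> (\<alpha> - \<beta>) r) + norm (cis c2 * chebyshev_exp_sum \<theta> \<phi> (\<alpha> + \<beta>) r))"
    unfolding abs_mult
    by (intro mult_mono order_trans[OF abs_triangle_ineq] add_mono abs_Im_le_cmod) auto
  finally show ?thesis
    by (simp add: norm_mult)
qed

lemma abs_mult_le_mult: "\<bar>x\<bar> \<le> a \<Longrightarrow> \<bar>y\<bar> \<le> b \<Longrightarrow> \<bar>x * y\<bar> \<le> a * b" for x y a b :: real
  unfolding abs_mult by (rule mult_mono) auto

lemma abs_back_diff2_mult_reverse_le:
  assumes u: "\<And>i. \<bar>u i\<bar> \<le> real i + 1" "\<And>i. \<bar>back_diff2 u i\<bar> \<le> 2"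
    and P: "\<And>r. \<bar>P r\<bar> \<le> 2 * (real r + 1)" "\<And>r. \<bar>P (r + 2) - P r\<bar> \<le> 4"
    and "i \<le> n"
  shows "\<bar>back_diff2 (\<lambda>i. u i * P (n - i)) i\<bar> \<le> 8 * real n + 4"
proof (cases "i < 2")
  case True
  have "\<bar>u i * P (n - i)\<bar> \<le> (real i + 1) * (2 * (real (n - i) + 1))"
    by (rule abs_mult_le_mult[OF u(1) P(1)])
  also have "\<dots> \<le> 2 * (2 * (real n + 1))"
    using True assms(5) by (intro mult_mono) auto
  finally show ?thesis
    using True by (simp add: back_diff2_def)
next
  case False
  then obtain k where k: "i = k + 2"
    by (metis add.commute le_Suc_ex not_less)
  have "n - k = n - i + 2"
    using k assms(5) by simp
  then have eq: "back_diff2 (\<lambda>i. u i * P (n - i)) i = back_diff2 u i * P (n - i) - u k * (P (n - i + 2) - P (n - i))"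
    using k by (simp add: back_diff2_def algebra_simps)
  have "\<bar>back_diff2 u i * P (n - i)\<bar> \<le> 2 * (2 * (real (n - i) + 1))"
    by (rule abs_mult_le_mult[OF u(2) P(1)])
  moreover have "\<bar>u k * (P (n - i + 2) - P (n - i))\<bar> \<le> (real k + 1) * 4"
    by (rule abs_mult_le_mult[OF u(1) P(2)])
  moreover have "2 * (2 * (real (n - i) + 1)) \<le> 4 * real n + 4" "(real k + 1) * 4 \<le> 4 * real n"
    using k assms(5) by auto
  ultimately show ?thesis
    unfolding eq using abs_triangle_ineq4[of "back_diff2 u i * P (n - i)" "u k * (P (n - i + 2) - P (n - i))"]
    by linarith
qed

lemma abs_sum_chebyshev_by_parts_le:
  assumes "n \<ge> 1" "\<And>j. \<bar>c j\<bar> \<le> 1" "\<And>j. \<bar>d j\<bar> \<le> 1"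
  shows "\<bar>\<Sum>i\<le>n. chebyshev_U i (cos \<theta>) * (\<Sum>l\<le>n - i. back_diff2 (\<lambda>l. chebyshev_U l (cos \<phi>)) l * d l)
           * (c i - c (i + 2))\<bar> \<le> 40 * real n ^ 2"
proof -
  define u where "u i = chebyshev_U i (cos \<theta>)" for i
  define P where "P r = (\<Sum>l\<le>r. back_diff2 (\<lambda>l. chebyshev_U l (cos \<phi>)) l * d l)" for r
  have term_le: "\<bar>back_diff2 (\<lambda>l. chebyshev_U l (cos \<phi>)) l * d l\<bar> \<le> 2" for l
    using abs_mult_le_mult[OF abs_back_diff2_chebyshev_U_le assms(3)] by simp
  have P_le: "\<bar>P r\<bar> \<le> 2 * (real r + 1)" for r
  proof -
    have "\<bar>P r\<bar> \<le> (\<Sum>l\<le>r. 2)"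
      unfolding P_def using term_le by (intro order_trans[OF sum_abs] sum_mono)
    then show ?thesis
      by simp
  qed
  have P_step: "\<bar>P (r + 2) - P r\<bar> \<le> 4" for r
    using term_le[of "Suc r"] term_le[of "Suc (Suc r)"] by (simp add: P_def numeral_2_eq_2)
  have u_le: "\<bar>u i\<bar> \<le> real i + 1" "\<bar>back_diff2 u i\<bar> \<le> 2" for i
    using abs_chebyshev_U_cos_le abs_back_diff2_chebyshev_U_le by (simp_all add: u_def[abs_def])
  have g_le: "\<bar>u i * P (n - i)\<bar> \<le> 2 * (real n + 1) ^ 2" if "i \<le> n" for i
  proof -
    have "\<bar>u i * P (n - i)\<bar> \<le> (real i + 1) * (2 * (real (n - i) + 1))"
      by (rule abs_mult_le_mult[OF u_le(1) P_le])
    also have "\<dots> \<le> (real n + 1) * (2 * (real n + 1))"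
      using that by (intro mult_mono) auto
    also have "\<dots> = 2 * (real n + 1) ^ 2"
      by (simp add: power2_eq_square)
    finally show ?thesis .
  qed
  have "\<bar>\<Sum>i\<le>n. u i * P (n - i) * (c i - c (i + 2))\<bar> \<le> (real n + 1) * (8 * real n + 4) + 2 * (2 * (real n + 1) ^ 2)"
    using abs_back_diff2_mult_reverse_le[OF u_le P_le P_step] by (intro abs_sum_mult_diff2_le[OF assms(2) g_le])
  also have "\<dots> \<le> 40 * real n ^ 2"
  proof -
    have "1 \<le> real n"
      using assms(1) by simp
    then have "real n \<le> real n * real n" "1 \<le> real n * real n"
      using mult_left_mono[of 1 "real n" "real n"] by linarith+
    then show ?thesis
      by (simp add: power2_eq_square algebra_simps)
  qed
  finally show ?thesis
    by (simp add: u_def P_def)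
qed

definition chebyshev_kernel :: "nat \<Rightarrow> real \<Rightarrow> real \<Rightarrow> real \<Rightarrow> real \<Rightarrow> real" where
  "chebyshev_kernel n \<theta> \<phi> \<alpha> \<beta> = (\<Sum>i\<le>n. \<Sum>l\<le>n - i. chebyshev_U i (cos \<theta>) * chebyshev_U l (cos \<phi>)
     * (cos (real i * \<alpha>) - cos (real (i + 2) * \<alpha>)) * (cos (real l * \<beta>) - cos (real (l + 2) * \<beta>)))"

lemma abs_chebyshev_kernel_le:
  assumes "n \<ge> 1"
  shows "\<bar>chebyshev_kernel n \<theta> \<phi> \<alpha> \<beta>\<bar>
    \<le> 40 * real n ^ 2 + 32 * real n ^ 3 * (bump_sum n \<theta> \<phi> (\<alpha> - \<beta>) + bump_sum n \<theta> \<phi> (\<alpha> + \<beta>))"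
proof -
  define B where "B r = (\<Sum>i\<le>r. chebyshev_U i (cos \<theta>) * chebyshev_U (r - i) (cos \<phi>)
    * (cos (real i * \<alpha>) - cos (real (i + 2) * \<alpha>)) * cos (real (r + 2 - i) * \<beta>))" for r
  define A where "A = (\<Sum>i\<le>n. chebyshev_U i (cos \<theta>) * (\<Sum>l\<le>n - i. back_diff2 (\<lambda>l. chebyshev_U l (cos \<phi>)) l
    * cos (real l * \<beta>)) * (cos (real i * \<alpha>) - cos (real (i + 2) * \<alpha>)))"
  have "n - 1 + 2 = n + 1"
    using assms by simp
  then have kernel_eq: "chebyshev_kernel n \<theta> \<phi> \<alpha> \<beta> = A - B (n - 1) - B n"
    unfolding chebyshev_kernel_def A_def B_def
    using triangle_sum_by_parts[OF assms, of "\<lambda>i. chebyshev_U i (cos \<theta>)" "\<lambda>l. chebyshev_U l (cos \<phi>)"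
        "\<lambda>i. cos (real i * \<alpha>)" "\<lambda>l. cos (real l * \<beta>)"]
    by simp
  define Y where "Y = 16 * real n ^ 3 * (bump_sum n \<theta> \<phi> (\<alpha> - \<beta>) + bump_sum n \<theta> \<phi> (\<alpha> + \<beta>))"
  have A_le: "\<bar>A\<bar> \<le> 40 * real n ^ 2"
    unfolding A_def by (rule abs_sum_chebyshev_by_parts_le[OF assms]) simp_all
  have B_le: "\<bar>B r\<bar> \<le> Y" if "r \<le> n" for r
  proof -
    have "\<bar>B r\<bar> \<le> norm (chebyshev_exp_sum \<theta> \<phi> (\<alpha> - \<beta>) r) + norm (chebyshev_exp_sum \<theta> \<phi> (\<alpha> + \<beta>) r)"
      unfolding B_def by (rule abs_boundary_sum_le)
    also have "\<dots> \<le> Y"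
      using norm_chebyshev_exp_sum_le[OF assms that, of \<theta> \<phi> "\<alpha> - \<beta>"]
        norm_chebyshev_exp_sum_le[OF assms that, of \<theta> \<phi> "\<alpha> + \<beta>"]
      unfolding Y_def distrib_left by linarith
    finally show ?thesis .
  qed
  have "\<bar>chebyshev_kernel n \<theta> \<phi> \<alpha> \<beta>\<bar> \<le> \<bar>A\<bar> + \<bar>B (n - 1)\<bar> + \<bar>B n\<bar>"
    unfolding kernel_eq by linarith
  also have "\<dots> \<le> 40 * real n ^ 2 + 2 * Y"
    using A_le B_le[of "n - 1"] B_le[of n] by linarith
  finally show ?thesis
    by (simp add: Y_def)
qed

section \<open>Sums of bumps along arithmetic progressions\<close>

lemma le_three_mult_sin:
  assumes "0 \<le> x" "x \<le> pi / 2"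
  shows "x \<le> 3 * sin x"
proof -
  have "\<bar>sin x - (\<Sum>m<3. sin_coeff m * x ^ m)\<bar> \<le> inverse (fact 3) * \<bar>x\<bar> ^ 3"
    by (rule Maclaurin_sin_bound)
  moreover have "(\<Sum>m<3. sin_coeff m * x ^ m) = x"
    by (simp add: numeral_3_eq_3 sin_coeff_def)
  ultimately have "x - sin x \<le> x ^ 3 / 6"
    using assms by (simp add: numeral_3_eq_3 abs_if split: if_splits)
  moreover have "x ^ 3 \<le> 4 * x"
  proof -
    have "x \<le> 2"
      using assms pi_less_4 by linarith
    then have "x * x ^ 2 \<le> x * 4"
      using assms power_mono[of x 2 2] by (intro mult_left_mono) auto
    then show ?thesis
      by (simp add: power2_eq_square power3_eq_cube mult.commute)
  qed
  ultimately show ?thesis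
    by linarith
qed

lemma inverse_one_plus_sin_sq_le:
  fixes a t :: real
  assumes "a \<ge> 0" "0 \<le> t" "t \<le> 3 * pi / 2"
  shows "1 / (1 + a * sin t ^ 2) \<le> 1 / (1 + a * (t / 3) ^ 2) + 1 / (1 + a * ((t - pi) / 3) ^ 2)"
proof -
  have "min t \<bar>t - pi\<bar> \<le> 3 * \<bar>sin t\<bar>"
  proof -
    consider "t \<le> pi / 2" | "pi / 2 \<le> t" "t \<le> pi" | "pi \<le> t"
      by linarith
    then show ?thesis
    proof cases
      case 1
      then show ?thesis using le_three_mult_sin[of t] assms by auto
    next
      case 2
      then show ?thesis using le_three_mult_sin[of "pi - t"] by auto
    next
      case 3
      then show ?thesis using le_three_mult_sin[of "t - pi"] assms by (auto simp: sin_diff)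
    qed
  qed
  then have "(min t \<bar>t - pi\<bar> / 3) ^ 2 \<le> \<bar>sin t\<bar> ^ 2"
    using assms(2) by (intro power_mono) auto
  then have "(min t \<bar>t - pi\<bar> / 3) ^ 2 \<le> sin t ^ 2"
    by simp
  then have "1 / (1 + a * sin t ^ 2) \<le> 1 / (1 + a * (min t \<bar>t - pi\<bar> / 3) ^ 2)"
    using assms(1) by (intro divide_left_mono add_left_mono mult_left_mono mult_pos_pos add_pos_nonneg) auto
  also have "\<dots> \<le> 1 / (1 + a * (t / 3) ^ 2) + 1 / (1 + a * ((t - pi) / 3) ^ 2)"
    using assms(1) by (cases "t \<le> \<bar>t - pi\<bar>") (auto simp: min_def power_divide add_nonneg_nonneg)
  finally show ?thesis .
qed

lemma sum_inverse_one_plus_sq_atMost_le: "(\<Sum>q\<le>Q. 1 / (1 + real q ^ 2)) \<le> 3 - 2 / (real Q + 1)"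
proof (induction Q)
  case 0
  then show ?case by simp
next
  case (Suc Q)
  have "(real Q + 1) * (real Q + 2) \<le> 2 * (1 + (real Q + 1) ^ 2)"
    by (simp add: power2_eq_square algebra_simps)
  then have "1 / (1 + (real Q + 1) ^ 2) \<le> 2 / ((real Q + 1) * (real Q + 2))"
    by (simp add: field_simps add_pos_nonneg)
  also have "\<dots> = 2 / (real Q + 1) - 2 / (real Q + 2)"
    by (simp add: field_simps)
  finally show ?case
    using Suc by (simp add: ac_simps)
qed

lemma sum_inverse_one_plus_sq_nat_le:
  assumes "finite Q"
  shows "(\<Sum>q\<in>Q. 1 / (1 + real q ^ 2)) \<le> 3"
proof -
  have "(\<Sum>q\<in>Q. 1 / (1 + real q ^ 2)) \<le> (\<Sum>q\<le>Max (insert 0 Q). 1 / (1 + real q ^ 2))"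
    using assms by (intro sum_mono2) auto
  also have "\<dots> \<le> 3 - 2 / (real (Max (insert 0 Q)) + 1)"
    by (rule sum_inverse_one_plus_sq_atMost_le)
  also have "\<dots> \<le> 3"
    by simp
  finally show ?thesis .
qed

lemma sum_inverse_one_plus_sq_ge_le:
  fixes A :: "int set" and g :: real
  assumes "finite A"
  shows "(\<Sum>k\<in>{k\<in>A. g \<le> of_int k}. 1 / (1 + (of_int k - g) ^ 2)) \<le> 3"
proof -
  define A' where "A' = {k\<in>A. g \<le> of_int k}"
  have k0: "\<lceil>g\<rceil> \<le> k" "real (nat (k - \<lceil>g\<rceil>)) \<le> of_int k - g" if "k \<in> A'" for k
    using that ceiling_correct[of g] by (auto simp: A'_def ceiling_le_iff)
  have "(\<Sum>k\<in>A'. 1 / (1 + (of_int k - g) ^ 2)) \<le> (\<Sum>k\<in>A'. 1 / (1 + real (nat (k - \<lceil>g\<rceil>)) ^ 2))"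
    using k0 by (intro sum_mono divide_left_mono add_left_mono power_mono) (auto intro!: mult_pos_pos add_pos_nonneg)
  also have "\<dots> = (\<Sum>q\<in>(\<lambda>k. nat (k - \<lceil>g\<rceil>)) ` A'. 1 / (1 + real q ^ 2))"
    using k0(1) by (subst sum.reindex) (auto simp: inj_on_def eq_nat_nat_iff)
  also have "\<dots> \<le> 3"
    using assms by (intro sum_inverse_one_plus_sq_nat_le) (simp add: A'_def)
  finally show ?thesis
    by (simp add: A'_def)
qed

lemma sum_inverse_one_plus_sq_int_le:
  fixes A :: "int set" and g :: real
  assumes "finite A"
  shows "(\<Sum>k\<in>A. 1 / (1 + (of_int k - g) ^ 2)) \<le> 6"
proof -
  have "(\<Sum>k\<in>{k\<in>A. \<not> g \<le> of_int k}. 1 / (1 + (of_int k - g) ^ 2))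
      = (\<Sum>k\<in>{k\<in>A. \<not> g \<le> of_int k}. 1 / (1 + (of_int (- k) - (- g)) ^ 2))"
    by (intro sum.cong refl) (simp add: power2_commute)
  also have "\<dots> = (\<Sum>k\<in>uminus ` {k\<in>A. \<not> g \<le> of_int k}. 1 / (1 + (of_int k - (- g)) ^ 2))"
    by (subst sum.reindex) (auto simp: inj_on_def)
  also have "\<dots> \<le> (\<Sum>k\<in>{k\<in>uminus ` A. - g \<le> of_int k}. 1 / (1 + (of_int k - (- g)) ^ 2))"
    using assms by (intro sum_mono2) auto
  also have "\<dots> \<le> 3"
    using assms by (intro sum_inverse_one_plus_sq_ge_le) simp
  finally have "(\<Sum>k\<in>{k\<in>A. \<not> g \<le> of_int k}. 1 / (1 + (of_int k - g) ^ 2)) \<le> 3" .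
  moreover have "(\<Sum>k\<in>{k\<in>A. g \<le> of_int k}. 1 / (1 + (of_int k - g) ^ 2)) \<le> 3"
    using assms by (rule sum_inverse_one_plus_sq_ge_le)
  moreover have "(\<Sum>k\<in>A. 1 / (1 + (of_int k - g) ^ 2))
      = (\<Sum>k\<in>{k\<in>A. g \<le> of_int k} \<union> {k\<in>A. \<not> g \<le> of_int k}. 1 / (1 + (of_int k - g) ^ 2))"
    by (rule sum.cong) auto
  moreover have "\<dots> = (\<Sum>k\<in>{k\<in>A. g \<le> of_int k}. 1 / (1 + (of_int k - g) ^ 2))
      + (\<Sum>k\<in>{k\<in>A. \<not> g \<le> of_int k}. 1 / (1 + (of_int k - g) ^ 2))"
    using assms by (intro sum.union_disjoint) auto
  ultimately show ?thesis
    by linarith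
qed

lemma inverse_one_plus_mult_sq_le:
  fixes a c x :: real
  assumes "c \<ge> 1" "a * c \<ge> 1"
  shows "1 / (1 + a * x ^ 2) \<le> c / (1 + x ^ 2)"
proof -
  have "0 < a * c" "0 < c"
    using assms by linarith+
  then have "a \<ge> 0"
    by (auto simp: zero_less_mult_iff)
  have "1 * x ^ 2 \<le> (a * c) * x ^ 2"
    using assms(2) by (intro mult_right_mono) auto
  then have "1 + x ^ 2 \<le> c * (1 + a * x ^ 2)"
    using assms(1) by (simp add: algebra_simps)
  then show ?thesis
    using \<open>a \<ge> 0\<close> by (simp add: field_simps add_pos_nonneg)
qed

lemma inverse_one_plus_sin_sq_le_shifted:
  fixes a h t :: real
  assumes "a * h ^ 2 / 9 \<ge> 1 / 15" "0 \<le> t" "t \<le> 3 * pi / 2"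
  shows "1 / (1 + a * sin t ^ 2) \<le> 15 / (1 + (t / h) ^ 2) + 15 / (1 + ((t - pi) / h) ^ 2)"
proof -
  have "0 < a * h ^ 2"
    using assms(1) by linarith
  then have "a \<ge> 0" "h \<noteq> 0"
    by (auto simp: zero_less_mult_iff)
  have scale: "1 / (1 + a * (x / 3) ^ 2) \<le> 15 / (1 + (x / h) ^ 2)" for x
    using inverse_one_plus_mult_sq_le[of 15 "a * h ^ 2 / 9" "x / h"] assms(1) \<open>h \<noteq> 0\<close>
    by (simp add: power_divide)
  show ?thesis
    using inverse_one_plus_sin_sq_le[OF \<open>a \<ge> 0\<close> assms(2,3)] scale[of t] scale[of "t - pi"] by linarith
qed

lemma sum_inverse_one_plus_sq_nat_shift_le:
  fixes g :: real
  assumes "finite K"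
  shows "(\<Sum>k\<in>K. 1 / (1 + (real k - g) ^ 2)) \<le> 6"
proof -
  have "(\<Sum>k\<in>K. 1 / (1 + (real k - g) ^ 2)) = (\<Sum>k\<in>int ` K. 1 / (1 + (of_int k - g) ^ 2))"
    by (subst sum.reindex) auto
  also have "\<dots> \<le> 6"
    using assms by (intro sum_inverse_one_plus_sq_int_le) auto
  finally show ?thesis .
qed

lemma obtain_phase_shift:
  fixes h c :: real
  assumes "h > 0" "real K * h \<le> pi / 2"
  obtains l :: int where "\<And>k. k \<in> {1..K + 1} \<Longrightarrow> 0 \<le> real k * h + c - of_int l * pi"
    "\<And>k. k \<in> {1..K + 1} \<Longrightarrow> real k * h + c - of_int l * pi \<le> 3 * pi / 2"
proof
  define l where "l = \<lfloor>(h + c) / pi\<rfloor>"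
  have "of_int l \<le> (h + c) / pi" "(h + c) / pi < of_int l + 1"
    unfolding l_def by linarith+
  then have "0 \<le> h + c - of_int l * pi" "h + c - of_int l * pi \<le> pi"
    by (simp_all add: field_simps)
  moreover fix k assume "k \<in> {1..K + 1}"
  then have "0 \<le> real k - 1" "real k - 1 \<le> real K"
    by auto
  then have "0 \<le> (real k - 1) * h" "(real k - 1) * h \<le> real K * h"
    using assms(1) by (auto intro: mult_right_mono)
  moreover note assms(2)
  moreover have "real k * h + c - of_int l * pi = (h + c - of_int l * pi) + (real k - 1) * h"
    by (simp add: algebra_simps)
  ultimately show "0 \<le> real k * h + c - of_int l * pi" "real k * h + c - of_int l * pi \<le> 3 * pi / 2"
    by linarith+
qed

lemma sum_inverse_one_plus_sin_sq_le:
  assumes "n \<ge> 2"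
  shows "(\<Sum>k\<in>{1..n div 2 + 1}. 1 / (1 + real n ^ 2 * sin (real k * (pi / (real n + 3)) + c) ^ 2)) \<le> 180"
proof -
  define h where "h = pi / (real n + 3)"
  have h: "h > 0" "h * (real n + 3) = pi"
    by (simp_all add: h_def)
  have "real (n div 2) * h \<le> real n / 2 * h"
    using h by (intro mult_right_mono) auto
  also have "\<dots> \<le> pi / 2"
    by (simp add: h_def field_simps)
  finally obtain l :: int where l: "\<And>k. k \<in> {1..n div 2 + 1} \<Longrightarrow> 0 \<le> real k * h + c - of_int l * pi"
    "\<And>k. k \<in> {1..n div 2 + 1} \<Longrightarrow> real k * h + c - of_int l * pi \<le> 3 * pi / 2"
    using obtain_phase_shift[OF h(1)] by blast
  define g where "g = (of_int l * pi - c) / h"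
  have nh: "real n ^ 2 * h ^ 2 / 9 \<ge> 1 / 15"
  proof -
    have "2 / 5 * 2 \<le> real n / (real n + 3) * pi"
      using assms pi_ge_two by (intro mult_mono) (auto simp: field_simps)
    then have "(4 / 5) ^ 2 \<le> (real n * h) ^ 2"
      by (intro power_mono) (auto simp: h_def)
    then show ?thesis
      by (simp only: power_mult_distrib) (simp add: power_divide)
  qed
  have "1 / (1 + real n ^ 2 * sin (real k * h + c) ^ 2)
      \<le> 15 / (1 + (real k - g) ^ 2) + 15 / (1 + (real k - (g + (real n + 3))) ^ 2)"
    if "k \<in> {1..n div 2 + 1}" for k
  proof -
    have "sin (real k * h + c) ^ 2 = sin (real k * h + c - of_int l * pi) ^ 2"
      by (simp add: sin_diff power_mult_distrib mult.commute[of _ pi])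
    moreover have "(real k * h + c - of_int l * pi) / h = real k - g"
      "(real k * h + c - of_int l * pi - pi) / h = real k - (g + (real n + 3))"
      using h by (simp_all add: g_def field_simps)
    ultimately show ?thesis
      using inverse_one_plus_sin_sq_le_shifted[OF nh l[OF that]] by simp
  qed
  then have "(\<Sum>k\<in>{1..n div 2 + 1}. 1 / (1 + real n ^ 2 * sin (real k * h + c) ^ 2))
      \<le> (\<Sum>k\<in>{1..n div 2 + 1}. 15 / (1 + (real k - g) ^ 2) + 15 / (1 + (real k - (g + (real n + 3))) ^ 2))"
    by (rule sum_mono)
  also have "\<dots> = 15 * (\<Sum>k\<in>{1..n div 2 + 1}. 1 / (1 + (real k - g) ^ 2))
      + 15 * (\<Sum>k\<in>{1..n div 2 + 1}. 1 / (1 + (real k - (g + (real n + 3))) ^ 2))"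
    by (simp only: sum.distrib sum_distrib_left times_divide_eq_right mult_1_right)
  also have "\<dots> \<le> 15 * 6 + 15 * 6"
    by (intro add_mono mult_left_mono sum_inverse_one_plus_sq_nat_shift_le) auto
  finally show ?thesis
    by (simp add: h_def)
qed

section \<open>Discrete orthogonality\<close>

lemma sin_half_mult_sum_cos:
  "2 * sin (x / 2) * (\<Sum>m=1..K. cos (real m * x)) = sin ((real K + 1 / 2) * x) - sin (x / 2)"
proof (induction K)
  case 0
  then show ?case by simp
next
  case (Suc K)
  have "2 * sin (x / 2) * cos ((real K + 1) * x) = sin (x / 2 + (real K + 1) * x) + sin (x / 2 - (real K + 1) * x)"
    using sin_times_cos[of "x / 2" "(real K + 1) * x"] by simp
  also have "x / 2 + (real K + 1) * x = (real K + 1 + 1 / 2) * x"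
    by (simp add: algebra_simps)
  also have "x / 2 - (real K + 1) * x = - ((real K + 1 / 2) * x)"
    by (simp add: algebra_simps)
  finally have "2 * sin (x / 2) * cos ((real K + 1) * x) = sin ((real K + 1 + 1 / 2) * x) - sin ((real K + 1 / 2) * x)"
    by simp
  then show ?case
    using Suc by (simp add: algebra_simps)
qed

lemma sum_cos_multiple:
  assumes "0 < l" "l < 2 * N"
  shows "(\<Sum>m=1..N - 1. cos (real m * (real l * pi / real N))) = - (1 + (-1) ^ l) / 2"
proof -
  define x where "x = real l * pi / real N"
  have "sin (x / 2) > 0"
    using assms by (intro sin_gt_zero) (simp_all add: x_def field_simps)
  have "(real (N - 1) + 1 / 2) * x = real l * pi - x / 2"
    using assms by (simp add: x_def of_nat_diff field_simps)
  then have "sin ((real (N - 1) + 1 / 2) * x) = - ((-1) ^ l) * sin (x / 2)"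
    by (simp add: sin_diff)
  then have "sin (x / 2) * (2 * (\<Sum>m=1..N - 1. cos (real m * x)) + (1 + (-1) ^ l)) = 0"
    using sin_half_mult_sum_cos[of x "N - 1"] by (simp add: algebra_simps)
  then show ?thesis
    using \<open>sin (x / 2) > 0\<close> by (simp add: x_def eq_divide_eq)
qed

lemma sum_sin_mult_sin_lt:
  assumes "0 < p" "p < q" "q < N"
  shows "(\<Sum>m=1..N - 1. sin (real p * (real m * pi / real N)) * sin (real q * (real m * pi / real N))) = 0"
proof -
  have sum_eq: "(\<Sum>m=1..N - 1. sin (real p * (real m * pi / real N)) * sin (real q * (real m * pi / real N)))
     = ((\<Sum>m=1..N - 1. cos (real m * (real (q - p) * pi / real N)))
        - (\<Sum>m=1..N - 1. cos (real m * (real (p + q) * pi / real N)))) / 2"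
    unfolding sum_subtractf[symmetric] sum_divide_distrib
  proof (rule sum.cong)
    fix m
    have "real p * (real m * pi / real N) - real q * (real m * pi / real N) = - (real m * (real (q - p) * pi / real N))"
      using assms by (simp add: of_nat_diff field_simps)
    moreover have "real p * (real m * pi / real N) + real q * (real m * pi / real N) = real m * (real (p + q) * pi / real N)"
      by (simp add: add_divide_distrib algebra_simps)
    ultimately show "sin (real p * (real m * pi / real N)) * sin (real q * (real m * pi / real N))
        = (cos (real m * (real (q - p) * pi / real N)) - cos (real m * (real (p + q) * pi / real N))) / 2"
      unfolding sin_times_sin by simp
  qed simp
  have parity: "(-1 :: real) ^ (p + q) = (-1) ^ (q - p)"
  proof -
    have e: "p + q = (q - p) + 2 * p"
      using assms by simp
    show ?thesis
      by (subst e) (simp add: power_add power_mult del: power_Suc)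
  qed
  have "(\<Sum>m=1..N - 1. cos (real m * (real (q - p) * pi / real N))) = - (1 + (-1) ^ (q - p)) / 2"
    using assms by (intro sum_cos_multiple) auto
  moreover have "(\<Sum>m=1..N - 1. cos (real m * (real (p + q) * pi / real N))) = - (1 + (-1) ^ (p + q)) / 2"
    using assms by (intro sum_cos_multiple) auto
  ultimately show ?thesis
    unfolding sum_eq parity by simp
qed

lemma sum_sin_sq:
  assumes "0 < p" "p < N"
  shows "(\<Sum>m=1..N - 1. sin (real p * (real m * pi / real N)) * sin (real p * (real m * pi / real N))) = real N / 2"
proof -
  have "(\<Sum>m=1..N - 1. sin (real p * (real m * pi / real N)) * sin (real p * (real m * pi / real N)))
     = ((\<Sum>m=1..N - 1. cos (real m * (real 0 * pi / real N)))
        - (\<Sum>m=1..N - 1. cos (real m * (real (2 * p) * pi / real N)))) / 2"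
    unfolding sum_subtractf[symmetric] sum_divide_distrib
  proof (rule sum.cong)
    fix m
    have "real p * (real m * pi / real N) + real p * (real m * pi / real N) = real m * (real (2 * p) * pi / real N)"
      by (simp add: field_simps)
    then show "sin (real p * (real m * pi / real N)) * sin (real p * (real m * pi / real N))
        = (cos (real m * (real 0 * pi / real N)) - cos (real m * (real (2 * p) * pi / real N))) / 2"
      unfolding sin_times_sin by (simp only:) simp
  qed simp
  then show ?thesis
    using assms sum_cos_multiple[of "2 * p" N] by (simp add: of_nat_diff)
qed

lemma sum_sin_mult_sin:
  assumes "0 < p" "p < N" "0 < q" "q < N"
  shows "(\<Sum>m=1..N - 1. sin (real p * (real m * pi / real N)) * sin (real q * (real m * pi / real N)))
     = (if p = q then real N / 2 else 0)"
proof (cases p q rule: linorder_cases)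
  case less
  then show ?thesis
    using sum_sin_mult_sin_lt[of p q N] assms by simp
next
  case greater
  then show ?thesis
    using sum_sin_mult_sin_lt[of q p N] assms by (simp add: mult.commute)
next
  case equal
  then show ?thesis
    using sum_sin_sq[of p N] assms by simp
qed

lemma sum_alternating_sin_mult_sin:
  assumes "0 < p" "p < N" "0 < q" "q < N"
  shows "(\<Sum>m=1..N - 1. (-1) ^ m * (sin (real p * (real m * pi / real N)) * sin (real q * (real m * pi / real N))))
     = - (if p + q = N then real N / 2 else 0)"
proof -
  have "(-1) ^ m * sin (real p * (real m * pi / real N)) = - sin (real (N - p) * (real m * pi / real N))" for m
  proof -
    have "real (N - p) * (real m * pi / real N) = real m * pi - real p * (real m * pi / real N)"
      using assms by (simp add: of_nat_diff field_simps)
    then show ?thesis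
      by (simp add: sin_diff)
  qed
  then have "(\<Sum>m=1..N - 1. (-1) ^ m * (sin (real p * (real m * pi / real N)) * sin (real q * (real m * pi / real N))))
      = - (\<Sum>m=1..N - 1. sin (real (N - p) * (real m * pi / real N)) * sin (real q * (real m * pi / real N)))"
    unfolding sum_negf[symmetric] by (intro sum.cong refl) (simp add: mult.assoc[symmetric])
  also have "\<dots> = - (if N - p = q then real N / 2 else 0)"
    using assms by (subst sum_sin_mult_sin) auto
  also have "(N - p = q) = (p + q = N)"
    using assms by auto
  finally show ?thesis .
qed

lemma eq_delta_if_diag_eq_row_norm:
  fixes P :: "'a \<Rightarrow> 'a \<Rightarrow> real"
  assumes "finite A" and diag: "\<And>x. x \<in> A \<Longrightarrow> P x x = (\<Sum>y\<in>A. P x y ^ 2)"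
    and trace: "(\<Sum>x\<in>A. P x x) = real (card A)" and "x \<in> A" "y \<in> A"
  shows "P x y = (if x = y then 1 else 0)"
proof -
  have le1: "P z z \<le> 1" if "z \<in> A" for z
  proof -
    have "P z z ^ 2 \<le> (\<Sum>y\<in>A. P z y ^ 2)"
      using assms(1) that by (intro member_le_sum) auto
    then have "P z z * P z z \<le> P z z * 1"
      using diag[OF that] by (simp add: power2_eq_square)
    moreover have "P z z \<ge> 0"
      using diag[OF that] by (simp add: sum_nonneg)
    ultimately show ?thesis
      by (cases "P z z = 0") (auto simp: mult_le_cancel_left)
  qed
  have "(\<Sum>z\<in>A. 1 - P z z) = 0"
    using trace by (simp add: sum_subtractf)
  then have one: "P z z = 1" if "z \<in> A" for z
    using sum_nonneg_eq_0_iff[OF assms(1), of "\<lambda>z. 1 - P z z"] le1 that by simp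
  have "(\<Sum>z\<in>A - {x}. P x z ^ 2) = 0"
    using diag[OF assms(4)] one[OF assms(4)] assms(1,4) by (simp add: sum.remove)
  then have "P x z = 0" if "z \<in> A" "z \<noteq> x" for z
    using sum_nonneg_eq_0_iff[of "A - {x}" "\<lambda>z. P x z ^ 2"] assms(1) that by simp
  then show ?thesis
    using one assms(4,5) by auto
qed

lemma orthogonal_rows_if_orthogonal_columns:
  fixes V :: "'a \<Rightarrow> 'b \<Rightarrow> real"
  assumes "finite A" "finite I" "card A = card I" "c > 0"
    and orth: "\<And>\<iota> \<kappa>. \<iota> \<in> I \<Longrightarrow> \<kappa> \<in> I \<Longrightarrow> (\<Sum>a\<in>A. V a \<iota> * V a \<kappa>) = (if \<iota> = \<kappa> then c else 0)"
    and "a \<in> A" "b \<in> A"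
  shows "(\<Sum>\<iota>\<in>I. V a \<iota> * V b \<iota>) = (if a = b then c else 0)"
proof -
  define P where "P x y = (\<Sum>\<iota>\<in>I. V x \<iota> * V y \<iota>) / c" for x y
  have diag: "P x x = (\<Sum>y\<in>A. P x y ^ 2)" for x
  proof -
    have "P x y ^ 2 = (\<Sum>\<iota>\<in>I. \<Sum>\<kappa>\<in>I. V x \<iota> * V x \<kappa> * (V y \<iota> * V y \<kappa>)) / c ^ 2" for y
      by (simp add: P_def power_divide power2_eq_square sum_product mult_ac)
    then have "(\<Sum>y\<in>A. P x y ^ 2) = (\<Sum>y\<in>A. \<Sum>\<iota>\<in>I. \<Sum>\<kappa>\<in>I. V x \<iota> * V x \<kappa> * (V y \<iota> * V y \<kappa>)) / c ^ 2"
      by (simp add: sum_divide_distrib)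
    also have "\<dots> = (\<Sum>\<iota>\<in>I. \<Sum>\<kappa>\<in>I. \<Sum>y\<in>A. V x \<iota> * V x \<kappa> * (V y \<iota> * V y \<kappa>)) / c ^ 2"
      by (subst sum.swap) (simp only: sum.swap[of _ A])
    also have "\<dots> = (\<Sum>\<iota>\<in>I. \<Sum>\<kappa>\<in>I. V x \<iota> * V x \<kappa> * (if \<iota> = \<kappa> then c else 0)) / c ^ 2"
      by (simp only: sum_distrib_left[symmetric] orth cong: sum.cong)
    also have "\<dots> = (\<Sum>\<iota>\<in>I. V x \<iota> * V x \<iota> * c) / c ^ 2"
      using assms(2) by (simp add: if_distrib sum.delta cong: if_cong)
    also have "\<dots> = P x x"
      using assms(4) by (simp add: P_def power2_eq_square sum_distrib_right[symmetric])
    finally show ?thesis ..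
  qed
  have "(\<Sum>x\<in>A. P x x) = (\<Sum>\<iota>\<in>I. \<Sum>x\<in>A. V x \<iota> * V x \<iota>) / c"
    unfolding P_def sum_divide_distrib[symmetric] by (rule arg_cong[where f="\<lambda>t. t / c"], rule sum.swap)
  also have "\<dots> = real (card A)"
    using assms(3,4) by (simp add: orth)
  finally have "P a b = (if a = b then 1 else 0)"
    using eq_delta_if_diag_eq_row_norm[of A P a b] diag assms(1,6,7) by blast
  then show ?thesis
    using assms(4) by (auto simp: P_def)
qed

lemma coeffs_eq_0_if_orthogonal_columns:
  fixes V :: "'a \<Rightarrow> 'b \<Rightarrow> real"
  assumes "finite A" "finite I" "c \<noteq> 0"
    and orth: "\<And>\<iota> \<kappa>. \<iota> \<in> I \<Longrightarrow> \<kappa> \<in> I \<Longrightarrow> (\<Sum>a\<in>A. V a \<iota> * V a \<kappa>) = (if \<iota> = \<kappa> then c else 0)"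
    and vanish: "\<And>a. a \<in> A \<Longrightarrow> (\<Sum>\<iota>\<in>I. C \<iota> * V a \<iota>) = 0" and "\<kappa> \<in> I"
  shows "C \<kappa> = 0"
proof -
  have "0 = (\<Sum>a\<in>A. (\<Sum>\<iota>\<in>I. C \<iota> * V a \<iota>) * V a \<kappa>)"
    using vanish by simp
  also have "\<dots> = (\<Sum>\<iota>\<in>I. C \<iota> * (\<Sum>a\<in>A. V a \<iota> * V a \<kappa>))"
    unfolding sum_distrib_right sum_distrib_left by (subst sum.swap) (simp add: mult.assoc)
  also have "\<dots> = (\<Sum>\<iota>\<in>I. C \<iota> * (if \<iota> = \<kappa> then c else 0))"
    using assms(6) by (intro sum.cong refl) (simp add: orth)
  also have "\<dots> = C \<kappa> * c"
    using assms(2,6) by (simp add: if_distrib sum.delta cong: if_cong)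
  finally show ?thesis
    using assms(3) by simp
qed

section \<open>Bivariate polynomials in the Chebyshev basis\<close>

definition degree_pairs :: "nat \<Rightarrow> (nat \<times> nat) set" where
  "degree_pairs n = Sigma {..n} (\<lambda>i. {..n - i})"

lemma finite_degree_pairs [simp]: "finite (degree_pairs n)"
  by (simp add: degree_pairs_def)

lemma sum_degree_pairs: "(\<Sum>(i, l)\<in>degree_pairs n. f i l) = (\<Sum>i\<le>n. \<Sum>l\<le>n - i. f i l)"
  unfolding degree_pairs_def by (subst sum.Sigma) auto

lemma card_degree_pairs: "2 * card (degree_pairs n) = (n + 1) * (n + 2)"
proof -
  have "card (degree_pairs n) = (\<Sum>i\<le>n. n - i + 1)"
    unfolding degree_pairs_def by (subst card_SigmaI) auto
  also have "\<dots> = (\<Sum>i\<le>n. i + 1)"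
    by (rule sum.reindex_bij_witness[where i="\<lambda>i. n - i" and j="\<lambda>i. n - i"]) auto
  also have "2 * \<dots> = (n + 1) * (n + 2)"
    by (induction n) auto
  finally show ?thesis .
qed

lemma poly2_add: "f \<in> poly2 n \<Longrightarrow> g \<in> poly2 n \<Longrightarrow> (\<lambda>p. f p + g p) \<in> poly2 n"
proof -
  assume "f \<in> poly2 n" "g \<in> poly2 n"
  then obtain c d where "\<forall>x y. f (x, y) = (\<Sum>i\<le>n. \<Sum>j\<le>n - i. c i j * x ^ i * y ^ j)"
    and "\<forall>x y. g (x, y) = (\<Sum>i\<le>n. \<Sum>j\<le>n - i. d i j * x ^ i * y ^ j)"
    unfolding poly2_def by blast
  then show ?thesis
    unfolding poly2_def
    by (intro CollectI exI[of _ "\<lambda>i j. c i j + d i j"]) (simp add: sum.distrib[symmetric] algebra_simps)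
qed

lemma poly2_scale: "f \<in> poly2 n \<Longrightarrow> (\<lambda>p. a * f p) \<in> poly2 n"
proof -
  assume "f \<in> poly2 n"
  then obtain c where "\<forall>x y. f (x, y) = (\<Sum>i\<le>n. \<Sum>j\<le>n - i. c i j * x ^ i * y ^ j)"
    unfolding poly2_def by blast
  then show ?thesis
    unfolding poly2_def
    by (intro CollectI exI[of _ "\<lambda>i j. a * c i j"]) (simp add: sum_distrib_left algebra_simps)
qed

lemma poly2_diff: "f \<in> poly2 n \<Longrightarrow> g \<in> poly2 n \<Longrightarrow> (\<lambda>p. f p - g p) \<in> poly2 n"
  using poly2_add[of f n "\<lambda>p. (-1) * g p"] poly2_scale[of g n "-1"] by simp

lemma poly2_sum:
  "finite F \<Longrightarrow> (\<And>t. t \<in> F \<Longrightarrow> g t \<in> poly2 n) \<Longrightarrow> (\<lambda>p. \<Sum>t\<in>F. g t p) \<in> poly2 n"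
proof (induction F rule: finite_induct)
  case empty
  then show ?case
    unfolding poly2_def by (intro CollectI exI[of _ "\<lambda>i j. 0"]) simp
next
  case (insert t F)
  then show ?case
    using poly2_add[of "g t" n "\<lambda>p. \<Sum>t\<in>F. g t p"] by simp
qed

lemma chebyshev_product_in_poly2:
  assumes "i + l \<le> n"
  shows "(\<lambda>p. chebyshev_U i (fst p) * chebyshev_U l (snd p)) \<in> poly2 n"
  unfolding poly2_def
proof (intro CollectI exI[of _ "\<lambda>p q. coeff (chebyshev_U_poly i) p * coeff (chebyshev_U_poly l) q"] allI)
  fix x y :: real
  have "(\<Sum>p\<le>n. \<Sum>q\<le>n - p. coeff (chebyshev_U_poly i) p * coeff (chebyshev_U_poly l) q * x ^ p * y ^ q)
      = (\<Sum>p\<le>n. coeff (chebyshev_U_poly i) p * x ^ p * chebyshev_U l y)"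
  proof (rule sum.cong[OF refl])
    fix p assume "p \<in> {..n}"
    show "(\<Sum>q\<le>n - p. coeff (chebyshev_U_poly i) p * coeff (chebyshev_U_poly l) q * x ^ p * y ^ q)
        = coeff (chebyshev_U_poly i) p * x ^ p * chebyshev_U l y"
    proof (cases "p \<le> i")
      case True
      then have "chebyshev_U l y = (\<Sum>q\<le>n - p. coeff (chebyshev_U_poly l) q * y ^ q)"
        using assms by (intro chebyshev_U_eq_sum_coeff) simp
      then show ?thesis
        by (simp add: sum_distrib_left algebra_simps)
    next
      case False
      then have "coeff (chebyshev_U_poly i) p = 0"
        using degree_chebyshev_U_poly[of i] by (intro coeff_eq_0) simp
      then show ?thesis
        by simp
    qed
  qed
  also have "\<dots> = chebyshev_U i x * chebyshev_U l y"
    using chebyshev_U_eq_sum_coeff[of i n x] assms by (simp add: sum_distrib_right)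
  finally show "chebyshev_U i (fst (x, y)) * chebyshev_U l (snd (x, y))
      = (\<Sum>p\<le>n. \<Sum>q\<le>n - p. coeff (chebyshev_U_poly i) p * coeff (chebyshev_U_poly l) q * x ^ p * y ^ q)"
    by simp
qed

definition in_chebyshev_span :: "nat \<Rightarrow> (real \<times> real \<Rightarrow> real) \<Rightarrow> bool" where
  "in_chebyshev_span n f \<longleftrightarrow>
     (\<exists>C. \<forall>x y. f (x, y) = (\<Sum>\<iota>\<in>degree_pairs n. C \<iota> * (chebyshev_U (fst \<iota>) x * chebyshev_U (snd \<iota>) y)))"

lemma in_chebyshev_span_add:
  assumes "in_chebyshev_span n f" "in_chebyshev_span n g"
  shows "in_chebyshev_span n (\<lambda>p. f p + g p)"
proof -
  obtain C D where "\<forall>x y. f (x, y) = (\<Sum>\<iota>\<in>degree_pairs n. C \<iota> * (chebyshev_U (fst \<iota>) x * chebyshev_U (snd \<iota>) y))"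
    and "\<forall>x y. g (x, y) = (\<Sum>\<iota>\<in>degree_pairs n. D \<iota> * (chebyshev_U (fst \<iota>) x * chebyshev_U (snd \<iota>) y))"
    using assms unfolding in_chebyshev_span_def by blast
  then show ?thesis
    unfolding in_chebyshev_span_def
    by (intro exI[of _ "\<lambda>\<iota>. C \<iota> + D \<iota>"]) (simp add: sum.distrib[symmetric] algebra_simps)
qed

lemma in_chebyshev_span_scale:
  assumes "in_chebyshev_span n f"
  shows "in_chebyshev_span n (\<lambda>p. a * f p)"
proof -
  obtain C where "\<forall>x y. f (x, y) = (\<Sum>\<iota>\<in>degree_pairs n. C \<iota> * (chebyshev_U (fst \<iota>) x * chebyshev_U (snd \<iota>) y))"
    using assms unfolding in_chebyshev_span_def by blast
  then show ?thesis
    unfolding in_chebyshev_span_def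
    by (intro exI[of _ "\<lambda>\<iota>. a * C \<iota>"]) (simp add: sum_distrib_left algebra_simps)
qed

lemma in_chebyshev_span_sum:
  "finite F \<Longrightarrow> (\<And>t. t \<in> F \<Longrightarrow> in_chebyshev_span n (g t)) \<Longrightarrow> in_chebyshev_span n (\<lambda>p. \<Sum>t\<in>F. g t p)"
proof (induction F rule: finite_induct)
  case empty
  then show ?case
    unfolding in_chebyshev_span_def by (intro exI[of _ "\<lambda>\<iota>. 0"]) simp
next
  case (insert t F)
  then show ?case
    using in_chebyshev_span_add[of n "g t" "\<lambda>p. \<Sum>t\<in>F. g t p"] by simp
qed

lemma monomial_in_chebyshev_span:
  assumes "p + q \<le> n"
  shows "in_chebyshev_span n (\<lambda>z. fst z ^ p * snd z ^ q)"
proof -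
  obtain \<beta> where \<beta>: "\<forall>x. x ^ p = (\<Sum>i\<le>p. \<beta> i * chebyshev_U i x)"
    using power_eq_sum_chebyshev_U by blast
  obtain \<gamma> where \<gamma>: "\<forall>y. y ^ q = (\<Sum>l\<le>q. \<gamma> l * chebyshev_U l y)"
    using power_eq_sum_chebyshev_U by blast
  define C where "C \<iota> = (if \<iota> \<in> {..p} \<times> {..q} then \<beta> (fst \<iota>) * \<gamma> (snd \<iota>) else 0)" for \<iota>
  have sub: "{..p} \<times> {..q} \<subseteq> degree_pairs n"
    using assms by (auto simp: degree_pairs_def)
  have "x ^ p * y ^ q = (\<Sum>\<iota>\<in>degree_pairs n. C \<iota> * (chebyshev_U (fst \<iota>) x * chebyshev_U (snd \<iota>) y))" for x y
  proof -
    have "x ^ p * y ^ q = (\<Sum>\<iota>\<in>{..p} \<times> {..q}. C \<iota> * (chebyshev_U (fst \<iota>) x * chebyshev_U (snd \<iota>) y))"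
      unfolding \<beta>[rule_format] \<gamma>[rule_format] sum_product sum.cartesian_product
      by (intro sum.cong refl) (auto simp: C_def algebra_simps)
    also have "\<dots> = (\<Sum>\<iota>\<in>degree_pairs n. C \<iota> * (chebyshev_U (fst \<iota>) x * chebyshev_U (snd \<iota>) y))"
      using sub by (intro sum.mono_neutral_left) (auto simp: C_def)
    finally show ?thesis .
  qed
  then show ?thesis
    unfolding in_chebyshev_span_def by auto
qed

lemma poly2_in_chebyshev_span:
  assumes "f \<in> poly2 n"
  shows "in_chebyshev_span n f"
proof -
  obtain c where c: "\<forall>x y. f (x, y) = (\<Sum>i\<le>n. \<Sum>j\<le>n - i. c i j * x ^ i * y ^ j)"
    using assms unfolding poly2_def by blast
  have "in_chebyshev_span n (\<lambda>z. \<Sum>i\<le>n. \<Sum>j\<le>n - i. c i j * (fst z ^ i * snd z ^ j))"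
    by (intro in_chebyshev_span_sum in_chebyshev_span_scale monomial_in_chebyshev_span) auto
  moreover have "f = (\<lambda>z. \<Sum>i\<le>n. \<Sum>j\<le>n - i. c i j * (fst z ^ i * snd z ^ j))"
    using c by (auto simp: fun_eq_iff mult.assoc)
  ultimately show ?thesis
    by simp
qed

section \<open>The Morrow-Patterson points\<close>

definition mp_yindex :: "nat \<Rightarrow> nat \<Rightarrow> nat" where
  "mp_yindex m k = (if odd m then 2 * k else 2 * k - 1)"

definition mp_index :: "nat \<Rightarrow> (nat \<times> nat) set" where
  "mp_index n = {1..n + 1} \<times> {1..n div 2 + 1}"

definition mp_theta :: "nat \<Rightarrow> nat \<times> nat \<Rightarrow> real" where
  "mp_theta n a = real (fst a) * pi / (real n + 2)"

definition mp_phi :: "nat \<Rightarrow> nat \<times> nat \<Rightarrow> real" where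
  "mp_phi n a = real (mp_yindex (fst a) (snd a)) * pi / (real n + 3)"

definition mp_node :: "nat \<Rightarrow> nat \<times> nat \<Rightarrow> real \<times> real" where
  "mp_node n a = (cos (mp_theta n a), cos (mp_phi n a))"

lemma finite_mp_index [simp]: "finite (mp_index n)"
  by (simp add: mp_index_def)

lemma card_mp_index:
  assumes "even n"
  shows "2 * card (mp_index n) = (n + 1) * (n + 2)"
  using assms by (auto simp: mp_index_def card_cartesian_product elim!: evenE)

lemma card_mp_index_eq_card_degree_pairs:
  assumes "even n"
  shows "card (mp_index n) = card (degree_pairs n)"
  using card_mp_index[OF assms] card_degree_pairs[of n] by simp

lemma MP_points_eq_image: "MP_points n = mp_node n ` mp_index n"
proof -
  have "MP_y n m k = cos (mp_phi n (m, k))" if "k \<ge> 1" for m k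
    using that by (auto simp: MP_y_def mp_phi_def mp_yindex_def of_nat_diff)
  then have "(cos (real m * pi / (real n + 2)), MP_y n m k) = mp_node n (m, k)" if "k \<ge> 1" for m k
    using that by (simp add: mp_node_def mp_theta_def)
  then show ?thesis
    unfolding MP_points_def mp_index_def by (auto simp: image_iff) (metis atLeastAtMost_iff)+
qed

lemma mp_yindex_mem:
  assumes "even n" "k \<in> {1..n div 2 + 1}"
  shows "mp_yindex m k \<in> {1..n + 2}"
  using assms by (auto simp: mp_yindex_def)

lemma mp_angles_bounds:
  assumes "even n" "a \<in> mp_index n"
  shows "0 < mp_theta n a" "mp_theta n a < pi" "0 < mp_phi n a" "mp_phi n a < pi"
proof -
  have "real (fst a) * pi < (real n + 2) * pi" "0 < fst a"
    using assms(2) by (auto simp: mp_index_def)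
  then show "0 < mp_theta n a" "mp_theta n a < pi"
    by (simp_all add: mp_theta_def field_simps)
  have "mp_yindex (fst a) (snd a) \<in> {1..n + 2}"
    using assms by (intro mp_yindex_mem) (auto simp: mp_index_def)
  then have "real (mp_yindex (fst a) (snd a)) * pi < (real n + 3) * pi" "0 < mp_yindex (fst a) (snd a)"
    by auto
  then show "0 < mp_phi n a" "mp_phi n a < pi"
    by (simp_all add: mp_phi_def field_simps)
qed

lemma inj_on_mp_node:
  assumes "even n"
  shows "inj_on (mp_node n) (mp_index n)"
proof (rule inj_onI)
  fix a b assume a: "a \<in> mp_index n" and b: "b \<in> mp_index n" and eq: "mp_node n a = mp_node n b"
  have "mp_theta n a = mp_theta n b" "mp_phi n a = mp_phi n b"
    using eq mp_angles_bounds[OF assms a] mp_angles_bounds[OF assms b]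
    by (auto simp: mp_node_def intro: cos_inj_pi)
  then have "fst a = fst b" "mp_yindex (fst a) (snd a) = mp_yindex (fst b) (snd b)"
    by (simp_all add: mp_theta_def mp_phi_def)
  moreover have "snd a \<ge> 1" "snd b \<ge> 1"
    using a b by (auto simp: mp_index_def)
  ultimately show "a = b"
    by (cases "odd (fst a)") (auto simp: mp_yindex_def prod_eq_iff)
qed

lemma mp_yindex_image:
  assumes "even n"
  shows "mp_yindex m ` {1..n div 2 + 1} = {j\<in>{1..n + 2}. odd (m + j)}"
proof -
  obtain t where t: "n = 2 * t"
    using assms by blast
  show ?thesis
  proof (intro set_eqI iffI)
    fix j assume "j \<in> mp_yindex m ` {1..n div 2 + 1}"
    then obtain k where "k \<in> {1..t + 1}" "j = mp_yindex m k"
      using t by auto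
    then show "j \<in> {j\<in>{1..n + 2}. odd (m + j)}"
      using t by (auto simp: mp_yindex_def)
  next
    fix j assume j: "j \<in> {j\<in>{1..n + 2}. odd (m + j)}"
    define k where "k = (if odd m then j div 2 else j div 2 + 1)"
    have "j = mp_yindex m k" "k \<in> {1..n div 2 + 1}"
      using j t by (auto simp: k_def mp_yindex_def elim!: evenE oddE)
    then show "j \<in> mp_yindex m ` {1..n div 2 + 1}"
      by blast
  qed
qed

lemma sum_mp_yindex:
  assumes "even n"
  shows "(\<Sum>k\<in>{1..n div 2 + 1}. g (mp_yindex m k)) = (\<Sum>j\<in>{1..n + 2}. if odd (m + j) then g j else (0::real))"
proof -
  have "inj_on (mp_yindex m) {1..n div 2 + 1}"
    by (auto simp: inj_on_def mp_yindex_def)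
  then have "(\<Sum>k\<in>{1..n div 2 + 1}. g (mp_yindex m k)) = (\<Sum>j\<in>mp_yindex m ` {1..n div 2 + 1}. g j)"
    by (simp only: sum.reindex comp_def)
  also have "\<dots> = (\<Sum>j\<in>{1..n + 2}. if odd (m + j) then g j else 0)"
    unfolding mp_yindex_image[OF assms] by (rule sum.inter_filter) simp
  finally show ?thesis .
qed

lemma sum_if_odd_add:
  fixes B :: "nat \<Rightarrow> real"
  shows "(\<Sum>j\<in>J. if odd (m + j) then B j else 0) = ((\<Sum>j\<in>J. B j) - (-1) ^ m * (\<Sum>j\<in>J. (-1) ^ j * B j)) / 2"
proof -
  have "(\<Sum>j\<in>J. if odd (m + j) then B j else 0) = (\<Sum>j\<in>J. (B j - (-1) ^ m * ((-1) ^ j * B j)) / 2)"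
    by (intro sum.cong refl) (auto simp: power_add[symmetric])
  also have "\<dots> = ((\<Sum>j\<in>J. B j) - (-1) ^ m * (\<Sum>j\<in>J. (-1) ^ j * B j)) / 2"
    by (simp only: sum_distrib_left sum_subtractf[symmetric] sum_divide_distrib)
  finally show ?thesis .
qed

definition mp_sine :: "nat \<Rightarrow> nat \<times> nat \<Rightarrow> nat \<times> nat \<Rightarrow> real" where
  "mp_sine n a \<iota> = sin ((real (fst \<iota>) + 1) * mp_theta n a) * sin ((real (snd \<iota>) + 1) * mp_phi n a)"

lemma mp_sine_orthogonal:
  assumes "even n" "\<iota> \<in> degree_pairs n" "\<kappa> \<in> degree_pairs n"
  shows "(\<Sum>a\<in>mp_index n. mp_sine n a \<iota> * mp_sine n a \<kappa>) = (if \<iota> = \<kappa> then (real n + 2) * (real n + 3) / 8 else 0)"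
proof -
  obtain i l i' l' where il: "\<iota> = (i, l)" "\<kappa> = (i', l')" "i + l \<le> n" "i' + l' \<le> n"
    using assms(2,3) by (cases \<iota>, cases \<kappa>) (auto simp: degree_pairs_def)
  define A where "A m = sin (real (i + 1) * (real m * pi / real (n + 2))) * sin (real (i' + 1) * (real m * pi / real (n + 2)))" for m
  define B where "B j = sin (real (l + 1) * (real j * pi / real (n + 3))) * sin (real (l' + 1) * (real j * pi / real (n + 3)))" for j
  define Y where "Y = (\<Sum>j=1..n + 2. B j)"
  define Y' where "Y' = (\<Sum>j=1..n + 2. (-1) ^ j * B j)"
  have "mp_sine n a \<iota> * mp_sine n a \<kappa> = A (fst a) * B (mp_yindex (fst a) (snd a))" for a
    unfolding mp_sine_def mp_theta_def mp_phi_def il A_def B_def by (simp add: ac_simps add.commute[of _ 1])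
  then have "(\<Sum>a\<in>mp_index n. mp_sine n a \<iota> * mp_sine n a \<kappa>)
      = (\<Sum>m=1..n + 1. \<Sum>k=1..n div 2 + 1. A m * B (mp_yindex m k))"
    unfolding mp_index_def sum.cartesian_product by (simp only: split_def)
  also have "\<dots> = (\<Sum>m=1..n + 1. A m * (\<Sum>j=1..n + 2. if odd (m + j) then B j else 0))"
    by (simp only: sum_distrib_left[symmetric] sum_mp_yindex[OF assms(1)])
  also have "\<dots> = (\<Sum>m=1..n + 1. A m * ((Y - (-1) ^ m * Y') / 2))"
    unfolding Y_def Y'_def sum_if_odd_add ..
  also have "\<dots> = (\<Sum>m=1..n + 1. (Y * A m - Y' * ((-1) ^ m * A m)) / 2)"
    by (intro sum.cong refl) (simp add: algebra_simps)
  also have "\<dots> = (Y * (\<Sum>m=1..n + 1. A m) - Y' * (\<Sum>m=1..n + 1. (-1) ^ m * A m)) / 2"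
    by (simp only: sum_divide_distrib[symmetric] sum_subtractf sum_distrib_left)
  also have "\<dots> = (if \<iota> = \<kappa> then (real n + 2) * (real n + 3) / 8 else 0)"
  proof -
    have sA: "(\<Sum>m=1..n + 1. A m) = (if i = i' then (real n + 2) / 2 else 0)"
      using sum_sin_mult_sin[of "i + 1" "n + 2" "i' + 1"] il by (simp add: A_def)
    have sA': "(\<Sum>m=1..n + 1. (-1) ^ m * A m) = - (if i + i' = n then (real n + 2) / 2 else 0)"
      using sum_alternating_sin_mult_sin[of "i + 1" "n + 2" "i' + 1"] il by (simp add: A_def mult.assoc)
    have sY: "Y = (if l = l' then (real n + 3) / 2 else 0)"
      using sum_sin_mult_sin[of "l + 1" "n + 3" "l' + 1"] il by (simp add: Y_def B_def)
    have sY': "Y' = - (if l + l' = n + 1 then (real n + 3) / 2 else 0)"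
      using sum_alternating_sin_mult_sin[of "l + 1" "n + 3" "l' + 1"] il by (simp add: Y'_def B_def mult.assoc)
    show ?thesis
      unfolding sA sA' sY sY' using il by (auto simp: field_simps)
  qed
  finally show ?thesis .
qed

lemma mp_sine_orthogonal_dual:
  assumes "even n" "a \<in> mp_index n" "b \<in> mp_index n"
  shows "(\<Sum>\<iota>\<in>degree_pairs n. mp_sine n a \<iota> * mp_sine n b \<iota>) = (if a = b then (real n + 2) * (real n + 3) / 8 else 0)"
  by (rule orthogonal_rows_if_orthogonal_columns[OF finite_mp_index finite_degree_pairs
        card_mp_index_eq_card_degree_pairs[OF assms(1)]
        _ mp_sine_orthogonal[OF assms(1)] assms(2,3)]) simp

lemma sin_mult_chebyshev_at_mp_node:
  "sin (mp_theta n b) * sin (mp_phi n b)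
     * (chebyshev_U (fst \<iota>) (fst (mp_node n b)) * chebyshev_U (snd \<iota>) (snd (mp_node n b))) = mp_sine n b \<iota>"
proof -
  have "sin (mp_theta n b) * sin (mp_phi n b)
      * (chebyshev_U (fst \<iota>) (cos (mp_theta n b)) * chebyshev_U (snd \<iota>) (cos (mp_phi n b)))
      = (sin (mp_theta n b) * chebyshev_U (fst \<iota>) (cos (mp_theta n b)))
        * (sin (mp_phi n b) * chebyshev_U (snd \<iota>) (cos (mp_phi n b)))"
    by (simp only: mult_ac)
  then show ?thesis
    by (simp only: mp_node_def fst_conv snd_conv mp_sine_def sin_mult_chebyshev_U_cos)
qed

definition mp_lagrange :: "nat \<Rightarrow> nat \<times> nat \<Rightarrow> real \<times> real \<Rightarrow> real" where
  "mp_lagrange n a p = 8 / ((real n + 2) * (real n + 3)) * sin (mp_theta n a) * sin (mp_phi n a)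
     * (\<Sum>\<iota>\<in>degree_pairs n. chebyshev_U (fst \<iota>) (fst p) * chebyshev_U (snd \<iota>) (snd p) * mp_sine n a \<iota>)"

lemma mp_lagrange_at_mp_node:
  assumes "even n" "a \<in> mp_index n" "b \<in> mp_index n"
  shows "mp_lagrange n a (mp_node n b) = (if a = b then 1 else 0)"
proof -
  define s where "s = sin (mp_theta n b) * sin (mp_phi n b)"
  define D where "D = (real n + 2) * (real n + 3)"
  have "s > 0"
    using mp_angles_bounds[OF assms(1,3)] by (simp add: s_def sin_gt_zero)
  have "s * (\<Sum>\<iota>\<in>degree_pairs n. chebyshev_U (fst \<iota>) (fst (mp_node n b)) * chebyshev_U (snd \<iota>) (snd (mp_node n b))
      * mp_sine n a \<iota>) = (\<Sum>\<iota>\<in>degree_pairs n. mp_sine n a \<iota> * mp_sine n b \<iota>)"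
    unfolding sum_distrib_left
  proof (rule sum.cong[OF refl])
    fix \<iota>
    have e: "s * (chebyshev_U (fst \<iota>) (fst (mp_node n b)) * chebyshev_U (snd \<iota>) (snd (mp_node n b))) = mp_sine n b \<iota>"
      unfolding s_def by (rule sin_mult_chebyshev_at_mp_node)
    have "s * (chebyshev_U (fst \<iota>) (fst (mp_node n b)) * chebyshev_U (snd \<iota>) (snd (mp_node n b)) * mp_sine n a \<iota>)
        = s * (chebyshev_U (fst \<iota>) (fst (mp_node n b)) * chebyshev_U (snd \<iota>) (snd (mp_node n b))) * mp_sine n a \<iota>"
      by (simp only: mult.assoc)
    also have "\<dots> = mp_sine n a \<iota> * mp_sine n b \<iota>"
      by (subst e) (rule mult.commute)
    finally show "s * (chebyshev_U (fst \<iota>) (fst (mp_node n b)) * chebyshev_U (snd \<iota>) (snd (mp_node n b)) * mp_sine n a \<iota>)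
        = mp_sine n a \<iota> * mp_sine n b \<iota>" .
  qed
  also have "\<dots> = (if a = b then D / 8 else 0)"
    unfolding D_def by (rule mp_sine_orthogonal_dual[OF assms])
  finally have "mp_lagrange n a (mp_node n b) = 8 / D * sin (mp_theta n a) * sin (mp_phi n a) * ((if a = b then D / 8 else 0) / s)"
    using \<open>s > 0\<close> unfolding mp_lagrange_def D_def by (simp add: eq_divide_eq mult.commute)
  moreover have "D > 0"
    by (simp add: D_def)
  ultimately show ?thesis
    using \<open>s > 0\<close> by (auto simp: s_def)
qed

lemma mp_lagrange_in_poly2: "mp_lagrange n a \<in> poly2 n"
proof -
  have "mp_lagrange n a = (\<lambda>p. \<Sum>\<iota>\<in>degree_pairs n. (8 / ((real n + 2) * (real n + 3)) * sin (mp_theta n a)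
      * sin (mp_phi n a) * mp_sine n a \<iota>) * (chebyshev_U (fst \<iota>) (fst p) * chebyshev_U (snd \<iota>) (snd p)))"
    unfolding mp_lagrange_def sum_distrib_left by (intro ext sum.cong refl) (simp add: mult_ac)
  also have "\<dots> \<in> poly2 n"
  proof (rule poly2_sum[OF finite_degree_pairs])
    fix \<iota> assume "\<iota> \<in> degree_pairs n"
    then have "(\<lambda>p. chebyshev_U (fst \<iota>) (fst p) * chebyshev_U (snd \<iota>) (snd p)) \<in> poly2 n"
      by (intro chebyshev_product_in_poly2) (auto simp: degree_pairs_def)
    then show "(\<lambda>p. 8 / ((real n + 2) * (real n + 3)) * sin (mp_theta n a) * sin (mp_phi n a) * mp_sine n a \<iota>
        * (chebyshev_U (fst \<iota>) (fst p) * chebyshev_U (snd \<iota>) (snd p))) \<in> poly2 n"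
      by (rule poly2_scale)
  qed
  finally show ?thesis .
qed

lemma poly2_eq_0_if_vanishes_on_mp_nodes:
  assumes "even n" "f \<in> poly2 n" "\<And>b. b \<in> mp_index n \<Longrightarrow> f (mp_node n b) = 0"
  shows "f p = 0"
proof -
  obtain C where C: "\<And>x y. f (x, y) = (\<Sum>\<iota>\<in>degree_pairs n. C \<iota> * (chebyshev_U (fst \<iota>) x * chebyshev_U (snd \<iota>) y))"
    using poly2_in_chebyshev_span[OF assms(2)] unfolding in_chebyshev_span_def by blast
  have vanish: "(\<Sum>\<iota>\<in>degree_pairs n. C \<iota> * mp_sine n b \<iota>) = 0" if "b \<in> mp_index n" for b
  proof -
    define s where "s = sin (mp_theta n b) * sin (mp_phi n b)"
    have "s * f (mp_node n b) = (\<Sum>\<iota>\<in>degree_pairs n.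
        C \<iota> * (s * (chebyshev_U (fst \<iota>) (fst (mp_node n b)) * chebyshev_U (snd \<iota>) (snd (mp_node n b)))))"
      unfolding C[of "fst (mp_node n b)" "snd (mp_node n b)", simplified] sum_distrib_left
      by (intro sum.cong refl) (rule mult.left_commute)
    also have "\<dots> = (\<Sum>\<iota>\<in>degree_pairs n. C \<iota> * mp_sine n b \<iota>)"
      unfolding s_def sin_mult_chebyshev_at_mp_node ..
    finally show ?thesis
      using assms(3)[OF that] by simp
  qed
  have "C \<iota> = 0" if "\<iota> \<in> degree_pairs n" for \<iota>
    by (rule coeffs_eq_0_if_orthogonal_columns[OF finite_mp_index finite_degree_pairs _
          mp_sine_orthogonal[OF assms(1)] vanish that]) simp
  then show ?thesis
    using C[of "fst p" "snd p"] by simp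
qed

lemma lagrange2_MP_points:
  assumes "even n" "a \<in> mp_index n"
  shows "lagrange2 n (MP_points n) (mp_node n a) = mp_lagrange n a"
  unfolding lagrange2_def
proof (rule the_equality)
  have at_node: "mp_lagrange n a (mp_node n b) = (if mp_node n b = mp_node n a then 1 else 0)"
    if "b \<in> mp_index n" for b
    using mp_lagrange_at_mp_node[OF assms that] inj_on_mp_node[OF assms(1)] that assms(2)
    by (auto dest: inj_onD)
  then show "mp_lagrange n a \<in> poly2 n \<and> (\<forall>b\<in>MP_points n. mp_lagrange n a b = (if b = mp_node n a then 1 else 0))"
    unfolding MP_points_eq_image by (auto intro: mp_lagrange_in_poly2)
  fix g assume g: "g \<in> poly2 n \<and> (\<forall>b\<in>MP_points n. g b = (if b = mp_node n a then 1 else 0))"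
  have "(\<lambda>p. g p - mp_lagrange n a p) \<in> poly2 n"
    using g by (intro poly2_diff mp_lagrange_in_poly2) simp
  moreover have "g (mp_node n b) - mp_lagrange n a (mp_node n b) = 0" if "b \<in> mp_index n" for b
    using g at_node[OF that] that unfolding MP_points_eq_image by auto
  ultimately have "g p - mp_lagrange n a p = 0" for p
    by (rule poly2_eq_0_if_vanishes_on_mp_nodes[OF assms(1)])
  then show "g = mp_lagrange n a"
    by auto
qed

lemma mp_lagrange_eq_chebyshev_kernel:
  assumes "\<bar>x\<bar> \<le> 1" "\<bar>y\<bar> \<le> 1"
  shows "mp_lagrange n a (x, y)
    = 2 / ((real n + 2) * (real n + 3)) * chebyshev_kernel n (arccos x) (arccos y) (mp_theta n a) (mp_phi n a)"
proof -
  have "chebyshev_kernel n (arccos x) (arccos y) (mp_theta n a) (mp_phi n a)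
      = (\<Sum>i\<le>n. \<Sum>l\<le>n - i. 4 * sin (mp_theta n a) * sin (mp_phi n a)
          * (chebyshev_U i x * chebyshev_U l y * mp_sine n a (i, l)))"
    using assms unfolding chebyshev_kernel_def cos_diff_cos_add2
    by (intro sum.cong refl) (simp add: cos_arccos_abs mp_sine_def mult_ac)
  also have "\<dots> = 4 * sin (mp_theta n a) * sin (mp_phi n a)
      * (\<Sum>\<iota>\<in>degree_pairs n. chebyshev_U (fst \<iota>) x * chebyshev_U (snd \<iota>) y * mp_sine n a \<iota>)"
    using sum_degree_pairs[of "\<lambda>i l. chebyshev_U i x * chebyshev_U l y * mp_sine n a (i, l)" n]
    by (simp add: sum_distrib_left split_def)
  finally show ?thesis
    by (simp add: mp_lagrange_def)
qed

lemma sum_bump_plus_mp_phi_le: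
  assumes "n \<ge> 2"
  shows "(\<Sum>k\<in>{1..n div 2 + 1}. bump n (c + mp_phi n (m, k))) \<le> 180"
proof -
  define h where "h = pi / (real n + 3)"
  define e :: real where "e = (if odd m then 0 else 1)"
  have "bump n (c + mp_phi n (m, k)) = 1 / (1 + real n ^ 2 * sin (real k * h + (c / 2 - e * h / 2)) ^ 2)"
    if "k \<in> {1..n div 2 + 1}" for k
  proof -
    have "real (mp_yindex m k) = 2 * real k - e"
      using that by (auto simp: mp_yindex_def e_def of_nat_diff)
    then have "mp_phi n (m, k) = (2 * real k - e) * h"
      by (simp add: mp_phi_def h_def)
    then have "(c + mp_phi n (m, k)) / 2 = real k * h + (c / 2 - e * h / 2)"
      by (simp add: field_simps)
    then show ?thesis
      unfolding bump_def by (rule arg_cong)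
  qed
  then have "(\<Sum>k\<in>{1..n div 2 + 1}. bump n (c + mp_phi n (m, k)))
      = (\<Sum>k\<in>{1..n div 2 + 1}. 1 / (1 + real n ^ 2 * sin (real k * h + (c / 2 - e * h / 2)) ^ 2))"
    by (rule sum.cong[OF refl])
  also have "\<dots> \<le> 180"
    unfolding h_def by (rule sum_inverse_one_plus_sin_sq_le[OF assms])
  finally show ?thesis .
qed

lemma sum_bump_minus_mp_phi_le:
  assumes "n \<ge> 2"
  shows "(\<Sum>k\<in>{1..n div 2 + 1}. bump n (c - mp_phi n (m, k))) \<le> 180"
  using sum_bump_plus_mp_phi_le[OF assms, of "- c" m] bump_uminus[of n "c - mp_phi n (m, _)"] by simp

lemma sum_bump_sum_mp_index_le:
  assumes "n \<ge> 2"
  shows "(\<Sum>a\<in>mp_index n. bump_sum n \<theta> \<phi> (mp_theta n a - mp_phi n a) + bump_sum n \<theta> \<phi> (mp_theta n a + mp_phi n a))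
    \<le> 1440 * (real n + 1)"
proof -
  have "(\<Sum>a\<in>mp_index n. bump_sum n \<theta> \<phi> (mp_theta n a - mp_phi n a) + bump_sum n \<theta> \<phi> (mp_theta n a + mp_phi n a))
      = (\<Sum>m=1..n + 1. \<Sum>k=1..n div 2 + 1.
          bump_sum n \<theta> \<phi> (mp_theta n (m, k) - mp_phi n (m, k)) + bump_sum n \<theta> \<phi> (mp_theta n (m, k) + mp_phi n (m, k)))"
    unfolding mp_index_def sum.cartesian_product by (simp only: split_def prod.collapse)
  also have "\<dots> \<le> (\<Sum>m=1..n + 1. 1440)"
  proof (rule sum_mono)
    fix m
    define t where "t = mp_theta n (m, 1)"
    have t: "mp_theta n (m, k) = t" for k
      by (simp add: t_def mp_theta_def)
    define S where "S c = (\<Sum>k=1..n div 2 + 1. bump n (c - mp_phi n (m, k)))" for c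
    define T where "T c = (\<Sum>k=1..n div 2 + 1. bump n (c + mp_phi n (m, k)))" for c
    have "(\<Sum>k=1..n div 2 + 1.
          bump_sum n \<theta> \<phi> (mp_theta n (m, k) - mp_phi n (m, k)) + bump_sum n \<theta> \<phi> (mp_theta n (m, k) + mp_phi n (m, k)))
       = S (t + \<theta> - \<phi>) + S (t + \<theta> + \<phi>) + S (t - \<theta> - \<phi>) + S (t - \<theta> + \<phi>)
         + T (t + \<theta> - \<phi>) + T (t + \<theta> + \<phi>) + T (t - \<theta> - \<phi>) + T (t - \<theta> + \<phi>)"
      unfolding S_def T_def bump_sum_def t sum.distrib[symmetric]
      by (intro sum.cong refl) (simp add: algebra_simps)
    also have "\<dots> \<le> 180 + 180 + 180 + 180 + 180 + 180 + 180 + 180"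
      unfolding S_def T_def by (intro add_mono sum_bump_minus_mp_phi_le[OF assms] sum_bump_plus_mp_phi_le[OF assms])
    also have "\<dots> = 1440"
      by simp
    finally show "(\<Sum>k=1..n div 2 + 1.
          bump_sum n \<theta> \<phi> (mp_theta n (m, k) - mp_phi n (m, k)) + bump_sum n \<theta> \<phi> (mp_theta n (m, k) + mp_phi n (m, k)))
        \<le> 1440" .
  qed
  also have "\<dots> = 1440 * (real n + 1)"
    by simp
  finally show ?thesis .
qed

lemma abs_mp_lagrange_le:
  assumes "n \<ge> 1" "\<bar>x\<bar> \<le> 1" "\<bar>y\<bar> \<le> 1"
  shows "\<bar>mp_lagrange n a (x, y)\<bar> \<le> 2 / ((real n + 2) * (real n + 3)) * (40 * real n ^ 2 + 32 * real n ^ 3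
    * (bump_sum n (arccos x) (arccos y) (mp_theta n a - mp_phi n a) + bump_sum n (arccos x) (arccos y) (mp_theta n a + mp_phi n a)))"
proof -
  have "\<bar>mp_lagrange n a (x, y)\<bar>
      = 2 / ((real n + 2) * (real n + 3)) * \<bar>chebyshev_kernel n (arccos x) (arccos y) (mp_theta n a) (mp_phi n a)\<bar>"
    by (simp add: mp_lagrange_eq_chebyshev_kernel[OF assms(2,3)] abs_mult)
  also have "\<dots> \<le> 2 / ((real n + 2) * (real n + 3)) * (40 * real n ^ 2 + 32 * real n ^ 3
    * (bump_sum n (arccos x) (arccos y) (mp_theta n a - mp_phi n a) + bump_sum n (arccos x) (arccos y) (mp_theta n a + mp_phi n a)))"
    by (intro mult_left_mono abs_chebyshev_kernel_le assms(1)) simp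
  finally show ?thesis .
qed

lemma sum_abs_mp_lagrange_le:
  assumes "even n" "n \<ge> 2" "\<bar>x\<bar> \<le> 1" "\<bar>y\<bar> \<le> 1"
  shows "(\<Sum>a\<in>mp_index n. \<bar>mp_lagrange n a (x, y)\<bar>) \<le> 100000 * real n ^ 2"
proof -
  define D where "D = (real n + 2) * (real n + 3)"
  define G where "G a = bump_sum n (arccos x) (arccos y) (mp_theta n a - mp_phi n a)
    + bump_sum n (arccos x) (arccos y) (mp_theta n a + mp_phi n a)" for a
  have "real (2 * card (mp_index n)) = real ((n + 1) * (n + 2))"
    using card_mp_index[OF assms(1)] by (rule arg_cong)
  then have card_eq: "2 * real (card (mp_index n)) = (real n + 1) * (real n + 2)"
    by (simp add: algebra_simps)
  have D: "D > 0" "real n * (real n + 1) \<le> D" "2 * real (card (mp_index n)) \<le> D"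
    unfolding D_def card_eq by (simp, simp_all add: algebra_simps)
  have "(\<Sum>a\<in>mp_index n. \<bar>mp_lagrange n a (x, y)\<bar>) \<le> (\<Sum>a\<in>mp_index n. 2 / D * (40 * real n ^ 2 + 32 * real n ^ 3 * G a))"
    using abs_mp_lagrange_le[of n x y] assms(2-4) by (intro sum_mono) (simp add: D_def G_def)
  also have "\<dots> = 2 / D * (\<Sum>a\<in>mp_index n. 40 * real n ^ 2 + 32 * real n ^ 3 * G a)"
    by (rule sum_distrib_left[symmetric])
  also have "(\<Sum>a\<in>mp_index n. 40 * real n ^ 2 + 32 * real n ^ 3 * G a)
      = real (card (mp_index n)) * (40 * real n ^ 2) + 32 * real n ^ 3 * (\<Sum>a\<in>mp_index n. G a)"
    by (simp add: sum.distrib sum_distrib_left)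
  also have "2 / D * (real (card (mp_index n)) * (40 * real n ^ 2) + 32 * real n ^ 3 * (\<Sum>a\<in>mp_index n. G a))
      \<le> 2 / D * (D / 2 * (40 * real n ^ 2) + 32 * real n ^ 3 * (1440 * (real n + 1)))"
  proof (rule mult_left_mono, rule add_mono)
    show "real (card (mp_index n)) * (40 * real n ^ 2) \<le> D / 2 * (40 * real n ^ 2)"
      using D(3) by (intro mult_right_mono) auto
    show "32 * real n ^ 3 * (\<Sum>a\<in>mp_index n. G a) \<le> 32 * real n ^ 3 * (1440 * (real n + 1))"
      using sum_bump_sum_mp_index_le[OF assms(2)] by (intro mult_left_mono) (simp_all add: G_def)
  qed (use D in auto)
  also have "\<dots> = 40 * real n ^ 2 + 92160 * real n ^ 2 * (real n * (real n + 1) / D)"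
    using D(1) by (simp add: field_simps power2_eq_square power3_eq_cube)
  also have "\<dots> \<le> 40 * real n ^ 2 + 92160 * real n ^ 2 * 1"
    using D by (intro add_left_mono mult_left_mono) simp_all
  also have "\<dots> \<le> 100000 * real n ^ 2"
    by simp
  finally show ?thesis .
qed

theorem theorem12:
  shows "\<exists>C>0. \<forall>n::nat. n > 0 \<and> even n \<longrightarrow> lebesgue_MP n \<le> C * (real n)^2"
proof (intro exI[of _ 100000] conjI allI impI)
  fix n :: nat
  assume "n > 0 \<and> even n"
  then have n: "even n" "n \<ge> 2"
    by (auto elim: evenE)
  show "lebesgue_MP n \<le> 100000 * (real n)^2"
    unfolding lebesgue_MP_def lebesgue_const_def
  proof (rule cSUP_least)
    fix p :: "real \<times> real"
    assume "p \<in> {-1..1} \<times> {-1..1}"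
    then obtain x y where p: "p = (x, y)" "\<bar>x\<bar> \<le> 1" "\<bar>y\<bar> \<le> 1"
      by (cases p) auto
    have "(\<Sum>a\<in>MP_points n. \<bar>lagrange2 n (MP_points n) a p\<bar>)
        = (\<Sum>a\<in>mp_index n. \<bar>lagrange2 n (MP_points n) (mp_node n a) p\<bar>)"
      unfolding MP_points_eq_image by (rule sum.reindex[OF inj_on_mp_node[OF n(1)], unfolded comp_def])
    also have "\<dots> = (\<Sum>a\<in>mp_index n. \<bar>mp_lagrange n a (x, y)\<bar>)"
      using p(1) by (intro sum.cong refl) (simp add: lagrange2_MP_points[OF n(1)])
    also have "\<dots> \<le> 100000 * (real n)^2"
      using sum_abs_mp_lagrange_le[OF n p(2,3)] .
    finally show "(\<Sum>a\<in>MP_points n. \<bar>lagrange2 n (MP_points n) a p\<bar>) \<le> 100000 * (real n)^2" .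
  qed auto
qed simp

end
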